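(* Let $R\in\{0,1\}$ be a source indicator ($R=0$ primary, $R=1$ auxiliary), $X\in\{0,1\}$ a treatment, $Y$ an outcome, $V$ observed covariates, $U$ unmeasured variables, and $Z\in\{0,1\}$ an instrument observed only when $R=1$; potential outcomes $Y_x$ satisfy $Y=XY_1+(1-X)Y_0$. Assume (A1) $Y_x\perp\!\!\!\perp X\mid V,U,R$; (A2) $Z\perp\!\!\!\perp U\mid V,R=1$, $Z\perp\!\!\!\perp Y\mid X,V,U,R=1$, and $Z$ and $X$ are dependent given $V,R=1$; and the relaxed outcome model $$E(Y\mid X,V,U,R)=\zeta_0(V,U)+\zeta(V,U)R+\beta(V,R)X$$ for unknown scalar functions $\zeta_0,\zeta,\beta$. Then, given the sensitivity function $\xi(V)$, $\beta_0(V)=\beta(V,0)$ is identified by $$\beta_0(V)=E\Big\{\frac{\beta_1(V)\sigma_1^2(V)-\xi(V)}{\sigma_0^2(V)}-\frac{(2R-1)\eta Y}{f(R\mid V)\sigma_0^2(V)}\;\Big|\;V\Big\},$$ where $\beta_1(V)=\dfrac{E(Y\mid Z=1,V,R=1)-E(Y\mid Z=0,V,R=1)}{E(X\mid Z=1,V,R=1)-E(X\mid Z=0,V,R=1)}$, and $\tau=E(Y_1-Y_0\mid R=0)$ is identified by $$\tau=E\Big[\frac{(1-R)\{\beta_1(V)\sigma_1^2(V)-\xi(V)\}}{q\,\sigma_0^2(V)}-\Big\{\frac{R}{f(R\mid V)}-1\Big\}\frac{\eta Y}{q\,\sigma_0^2(V)}\Big].$$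
   Context: For $r=0,1$: $\varepsilon_r(V,U)=E(X\mid V,U,R=r)$ and $\zeta_r(V,U)=E(Y\mid V,U,R=r,X=0)$. The sensitivity parameter is $\xi(V)=\mathrm{Cov}\{\varepsilon_0(V,U),\zeta_0(V,U)\mid V,R=0\}-\mathrm{Cov}\{\varepsilon_1(V,U),\zeta_1(V,U)\mid V,R=1\}$. Notation: $\omega(V)=P(R=1\mid V)$, $f(R\mid V)=R\omega(V)+(1-R)\{1-\omega(V)\}$; $\mu(V,R)=E(X\mid V,R)$, $\mu_r=\mu(\cdot,r)$; $\eta=X-\mu(V,R)$; $\sigma_r^2(V)=\mu_r(V)\{1-\mu_r(V)\}$; $q=P(R=0)$; $\beta_r(V)=\beta(V,r)$. *)

theory Defs
  imports "HOL-Probability.Probability"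
begin

definition gen :: "'a measure \<Rightarrow> 'b measure \<Rightarrow> ('a \<Rightarrow> 'b) \<Rightarrow> 'a measure" where
  "gen M N W = vimage_algebra (space M) W N"

definition cexp :: "'a measure \<Rightarrow> 'b measure \<Rightarrow> ('a \<Rightarrow> 'b) \<Rightarrow> ('a \<Rightarrow> real) \<Rightarrow> 'a \<Rightarrow> real" where
  "cexp M N W f = real_cond_exp M (gen M N W) f"

text \<open>Conditional independence of A and B given C, holding on the event P
  (P is meant to be determined by C, e.g. R = 1 with R a component of C):
  P(A in S, B in T | C) = P(A in S | C) P(B in T | C) almost surely on P.\<close>
definition cond_indep_on ::
  "'a measure \<Rightarrow> ('a \<Rightarrow> bool) \<Rightarrow> 'b measure \<Rightarrow> ('a \<Rightarrow> 'b) \<Rightarrow> 'c measure \<Rightarrow> ('a \<Rightarrow> 'c)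
     \<Rightarrow> 'd measure \<Rightarrow> ('a \<Rightarrow> 'd) \<Rightarrow> bool" where
  "cond_indep_on M P MA A MB B MC C \<longleftrightarrow>
     (\<forall>S\<in>sets MA. \<forall>T\<in>sets MB. AE \<omega> in M. P \<omega> \<longrightarrow>
        cexp M MC C (indicator {x\<in>space M. A x \<in> S \<and> B x \<in> T}) \<omega> =
        cexp M MC C (indicator {x\<in>space M. A x \<in> S}) \<omega> *
        cexp M MC C (indicator {x\<in>space M. B x \<in> T}) \<omega>)"

text \<open>Wald ratio beta_1(v) from versions gY z v = E(Y|Z=z,V=v,R=1), gX z v = E(X|Z=z,V=v,R=1).\<close>
definition wald :: "(real \<Rightarrow> 'v \<Rightarrow> real) \<Rightarrow> (real \<Rightarrow> 'v \<Rightarrow> real) \<Rightarrow> 'v \<Rightarrow> real" where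
  "wald gY gX v = (gY 1 v - gY 0 v) / (gX 1 v - gX 0 v)"

definition sig2 :: "('v \<Rightarrow> real \<Rightarrow> real) \<Rightarrow> 'v \<Rightarrow> real \<Rightarrow> real" where
  "sig2 mu v r = mu v r * (1 - mu v r)"

definition fRV :: "('v \<Rightarrow> real) \<Rightarrow> real \<Rightarrow> 'v \<Rightarrow> real" where
  "fRV om r v = r * om v + (1 - r) * (1 - om v)"

end

theory Submission
  imports Defs
begin

text \<open>
  Given \<open>(V, U, R)\<close>, assumption (A1) and the outcome model give
  \<open>E(Y\<^sub>1 - Y\<^sub>0 | V, U, R) = \<beta>(V, R)\<close>, hence \<open>\<tau> q = E{(1 - R) \<beta>\<^sub>0(V)}\<close>.
  In the auxiliary sample, (A2) turns the outcome model into the moment equations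
  \<open>E(Y | Z = z, V, R = 1) = E(\<zeta>\<^sub>1 | V, R = 1) + \<beta>\<^sub>1(V) E(X | Z = z, V, R = 1)\<close> for \<open>z = 0, 1\<close>,
  so \<open>\<beta>\<^sub>1\<close> is the Wald ratio; overlap carries this from \<open>R = 1\<close> to almost every \<open>V\<close>.
  On the other hand \<open>E(\<eta> Y | V, R = r) = Cov\<^sub>r(\<epsilon>\<^sub>r, \<zeta>\<^sub>r | V) + \<beta>\<^sub>r(V) \<sigma>\<^sub>r\<^sup>2(V)\<close>, and the weights
  \<open>(2R - 1) / f(R | V)\<close> take the difference of the two sources:
  \<open>E{(2R - 1) \<eta> Y / (f(R | V) \<sigma>\<^sub>0\<^sup>2(V)) | V} = (\<beta>\<^sub>1 \<sigma>\<^sub>1\<^sup>2 - \<xi>) / \<sigma>\<^sub>0\<^sup>2 - \<beta>\<^sub>0\<close>.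
  This is the first identity; averaging it over \<open>R = 0\<close> gives the second.
\<close>

section \<open>Generated \<sigma>-algebras and conditional expectations\<close>

lemma sigma_finite_subalgebra_if_prob_space:
  assumes "prob_space M" and "subalgebra M F"
  shows "sigma_finite_subalgebra M F"
proof -
  interpret prob_space M by fact
  show ?thesis
    by (intro finite_measure_subalgebra_is_sigma_finite)
       (simp add: finite_measure_subalgebra_def finite_measure_subalgebra_axioms_def
         assms(2) finite_measure_axioms)
qed

lemma space_gen [simp]: "space (gen M N W) = space M"
  by (simp add: gen_def)

lemma measurable_gen:
  assumes "W \<in> M \<rightarrow>\<^sub>M N" and "\<phi> \<in> N \<rightarrow>\<^sub>M L"
    and "\<And>\<omega>. \<omega> \<in> space M \<Longrightarrow> f \<omega> = \<phi> (W \<omega>)"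
  shows "f \<in> gen M N W \<rightarrow>\<^sub>M L"
proof -
  have "(\<lambda>\<omega>. \<phi> (W \<omega>)) \<in> gen M N W \<rightarrow>\<^sub>M L"
    unfolding gen_def
    by (rule measurable_compose[OF measurable_vimage_algebra1 assms(2)])
       (auto intro: measurable_space[OF assms(1)])
  then show ?thesis
    by (rule measurable_cong[THEN iffD1, rotated]) (simp add: assms(3))
qed

lemma measurable_generator_gen: "W \<in> M \<rightarrow>\<^sub>M N \<Longrightarrow> W \<in> gen M N W \<rightarrow>\<^sub>M N"
  by (rule measurable_gen[where \<phi> = id]) auto

lemma subalgebra_gen_gen:
  assumes "W\<^sub>2 \<in> M \<rightarrow>\<^sub>M N\<^sub>2" and "\<phi> \<in> N\<^sub>2 \<rightarrow>\<^sub>M N\<^sub>1"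
    and "\<And>\<omega>. \<omega> \<in> space M \<Longrightarrow> W\<^sub>1 \<omega> = \<phi> (W\<^sub>2 \<omega>)"
  shows "subalgebra (gen M N\<^sub>2 W\<^sub>2) (gen M N\<^sub>1 W\<^sub>1)"
  using sets_image_in_sets[OF _ measurable_gen[OF assms]]
  by (auto simp: subalgebra_def gen_def)

lemma subalgebra_gen: "W \<in> M \<rightarrow>\<^sub>M N \<Longrightarrow> subalgebra M (gen M N W)"
  using sets_image_in_sets[of M "space M" W N] by (auto simp: subalgebra_def gen_def)

lemma sigma_finite_subalgebra_gen:
  "prob_space M \<Longrightarrow> W \<in> M \<rightarrow>\<^sub>M N \<Longrightarrow> sigma_finite_subalgebra M (gen M N W)"
  by (rule sigma_finite_subalgebra_if_prob_space[OF _ subalgebra_gen])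

lemma integrable_bounded_mult:
  fixes f k :: "'a \<Rightarrow> real"
  assumes "integrable M f" and "k \<in> borel_measurable M" and "AE x in M. \<bar>k x\<bar> \<le> 1"
  shows "integrable M (\<lambda>x. k x * f x)"
proof (rule Bochner_Integration.integrable_bound[OF assms(1)])
  show "AE x in M. norm (k x * f x) \<le> norm (f x)"
    using assms(3) by eventually_elim (simp add: abs_mult mult_left_le_one_le)
qed (use assms in auto)

context sigma_finite_subalgebra
begin

lemma real_cond_exp_local:
  assumes E [measurable]: "E \<in> sets F" and [measurable]: "f \<in> borel_measurable M"
  shows "AE x in M. x \<in> E \<longrightarrow> real_cond_exp M F f x = real_cond_exp M F (\<lambda>x. indicator E x * f x) x"
proof -
  have [measurable]: "E \<in> sets M" using E subalg by (auto simp: subalgebra_def)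
  have "AE x in M. indicator E x * nn_cond_exp M F (\<lambda>x. ennreal (\<sigma> * f x)) x
      = nn_cond_exp M F (\<lambda>x. ennreal (\<sigma> * (indicator E x * f x))) x" for \<sigma> :: real
  proof -
    have "(\<lambda>x. ennreal (\<sigma> * (indicator E x * f x))) = (\<lambda>x. indicator E x * ennreal (\<sigma> * f x))"
      by (auto simp: indicator_def)
    then show ?thesis by (simp add: nn_cond_exp_prod)
  qed
  from this[of 1] this[of "-1"] show ?thesis
    unfolding real_cond_exp_def by eventually_elim auto
qed

end

lemma real_cond_exp_add_measurable:
  fixes f g :: "'a \<Rightarrow> real"
  assumes "prob_space M" and "sigma_finite_subalgebra M F"
    and g [measurable]: "g \<in> borel_measurable F" and f: "integrable M f"
  shows "AE x in M. real_cond_exp M F (\<lambda>x. g x + f x) x = g x + real_cond_exp M F f x"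
proof -
  interpret prob_space M by fact
  interpret F: sigma_finite_subalgebra M F by fact
  have [measurable]: "g \<in> borel_measurable M" by (rule measurable_from_subalg[OF F.subalg g])
  have [measurable]: "f \<in> borel_measurable M" using f by auto
  \<comment> \<open>\<open>g\<close> need not be integrable: localise to the \<open>F\<close>-sets where \<open>\<bar>g\<bar> \<le> n\<close>\<close>
  define E where "E n = {x\<in>space M. \<bar>g x\<bar> \<le> real n}" for n :: nat
  have EF: "E n \<in> sets F" for n
  proof -
    have "{x\<in>space F. \<bar>g x\<bar> \<le> real n} \<in> sets F" by measurable
    moreover have "space F = space M" using F.subalg by (simp add: subalgebra_def)
    ultimately show ?thesis by (simp add: E_def)
  qed
  have [measurable]: "E n \<in> sets M" for n
    using EF[of n] F.subalg by (auto simp: subalgebra_def)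
  have "AE x in M. x \<in> E n \<longrightarrow> real_cond_exp M F (\<lambda>x. g x + f x) x = g x + real_cond_exp M F f x" for n
  proof -
    have ig: "integrable M (\<lambda>x. indicator (E n) x * g x)"
      by (rule Bochner_Integration.integrable_bound[OF integrable_const[of "real n"]])
         (auto simp: E_def indicator_def)
    have if': "integrable M (\<lambda>x. indicator (E n) x * f x)"
      by (rule integrable_bounded_mult[OF f]) (auto simp: indicator_def)
    have "AE x in M. real_cond_exp M F (\<lambda>x. indicator (E n) x * (g x + f x)) x
        = real_cond_exp M F (\<lambda>x. indicator (E n) x * g x) x
          + real_cond_exp M F (\<lambda>x. indicator (E n) x * f x) x"
      unfolding distrib_left by (rule F.real_cond_exp_add[OF ig if'])
    moreover have "AE x in M. real_cond_exp M F (\<lambda>x. indicator (E n) x * g x) x = indicator (E n) x * g x"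
      by (rule F.real_cond_exp_F_meas[OF ig]) (use EF in simp)
    moreover have "AE x in M. real_cond_exp M F (\<lambda>x. indicator (E n) x * f x) x
        = indicator (E n) x * real_cond_exp M F f x"
      using if' EF by (intro F.real_cond_exp_mult) auto
    moreover have "(\<lambda>x. g x + f x) \<in> borel_measurable M" by measurable
    note F.real_cond_exp_local[OF EF[of n] this]
    ultimately show ?thesis by eventually_elim (simp add: indicator_def)
  qed
  then have "AE x in M. \<forall>n. x \<in> E n \<longrightarrow>
      real_cond_exp M F (\<lambda>x. g x + f x) x = g x + real_cond_exp M F f x"
    by (subst AE_all_countable) blast
  then show ?thesis
  proof (rule AE_mp[OF _ AE_I2], intro impI)
    fix x assume "x \<in> space M"
    then have "x \<in> E (nat \<lceil>\<bar>g x\<bar>\<rceil>)" by (auto simp: E_def real_nat_ceiling_ge)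
    moreover assume "\<forall>n. x \<in> E n \<longrightarrow> real_cond_exp M F (\<lambda>x. g x + f x) x = g x + real_cond_exp M F f x"
    ultimately show "real_cond_exp M F (\<lambda>x. g x + f x) x = g x + real_cond_exp M F f x" by blast
  qed
qed

lemma real_cond_exp_tower_mult:
  fixes w X e :: "'a \<Rightarrow> real"
  assumes P: "prob_space M" and sub: "subalgebra M G" "subalgebra G F"
    and [measurable]: "w \<in> borel_measurable G" "X \<in> borel_measurable M" "e \<in> borel_measurable M"
    and int: "integrable M (\<lambda>x. w x * X x)"
    and e: "AE x in M. real_cond_exp M G X x = e x"
  shows "AE x in M. real_cond_exp M F (\<lambda>x. w x * X x) x = real_cond_exp M F (\<lambda>x. w x * e x) x"
proof -
  interpret G: sigma_finite_subalgebra M G by (rule sigma_finite_subalgebra_if_prob_space[OF P sub(1)])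
  have [measurable]: "w \<in> borel_measurable M" by (rule measurable_from_subalg[OF sub(1)]) simp
  have "subalgebra M F" using sub by (auto simp: subalgebra_def)
  then interpret F: sigma_finite_subalgebra M F by (rule sigma_finite_subalgebra_if_prob_space[OF P])
  have "AE x in M. real_cond_exp M G (\<lambda>x. w x * X x) x = w x * real_cond_exp M G X x"
    using int by (intro G.real_cond_exp_mult) auto
  with e have "AE x in M. real_cond_exp M G (\<lambda>x. w x * X x) x = w x * e x"
    by eventually_elim simp
  then have "AE x in M. real_cond_exp M F (real_cond_exp M G (\<lambda>x. w x * X x)) x
      = real_cond_exp M F (\<lambda>x. w x * e x) x"
    using sub(1) by (intro F.real_cond_exp_cong) (auto intro: measurable_from_subalg)
  then show ?thesis
    using F.real_cond_exp_nested_subalg[OF sub int] by eventually_elim simp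
qed

lemma integral_real_cond_exp_mult_eq:
  fixes h g \<pi> :: "'a \<Rightarrow> real"
  assumes "sigma_finite_subalgebra M F"
    and [measurable]: "h \<in> borel_measurable M" "g \<in> borel_measurable M" "\<pi> \<in> borel_measurable F"
    and int: "integrable M (\<lambda>x. real_cond_exp M F h x * g x)" "integrable M (\<lambda>x. \<pi> x * h x)"
    and \<pi>: "AE x in M. real_cond_exp M F g x = \<pi> x"
  shows "(\<integral>x. real_cond_exp M F h x * g x \<partial>M) = (\<integral>x. \<pi> x * h x \<partial>M)"
proof -
  interpret F: sigma_finite_subalgebra M F by fact
  have [measurable]: "\<pi> \<in> borel_measurable M" by (rule measurable_from_subalg[OF F.subalg]) simp
  have "(\<integral>x. real_cond_exp M F h x * g x \<partial>M) = (\<integral>x. real_cond_exp M F h x * real_cond_exp M F g x \<partial>M)"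
    using int(1) by (intro F.real_cond_exp_intg(2)[symmetric]) auto
  also have "\<dots> = (\<integral>x. \<pi> x * real_cond_exp M F h x \<partial>M)"
    using \<pi> by (intro integral_cong_AE) (auto elim!: eventually_mono)
  also have "\<dots> = (\<integral>x. \<pi> x * h x \<partial>M)"
    using int(2) by (intro F.real_cond_exp_intg(2)) auto
  finally show ?thesis .
qed

lemma AE_comp_if_AE_where_weight_nonzero:
  assumes P: "prob_space M" and [measurable]: "V \<in> M \<rightarrow>\<^sub>M MV" "\<pi> \<in> borel_measurable MV"
    and \<rho>: "integrable M \<rho>" "AE x in M. 0 \<le> \<rho> x"
    and \<pi>: "AE x in M. cexp M MV V \<rho> x = \<pi> (V x)" "AE x in M. 0 < \<pi> (V x)"
    and Q: "{v\<in>space MV. Q v} \<in> sets MV"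
    and hyp: "AE x in M. \<rho> x \<noteq> 0 \<longrightarrow> Q (V x)"
  shows "AE x in M. Q (V x)"
proof -
  interpret prob_space M by fact
  let ?F = "gen M MV V"
  interpret F: sigma_finite_subalgebra M ?F by (rule sigma_finite_subalgebra_gen[OF P]) measurable
  have [measurable]: "V \<in> ?F \<rightarrow>\<^sub>M MV" by (rule measurable_gen[where \<phi> = id]) auto
  have [measurable]: "\<rho> \<in> borel_measurable M" using \<rho> by auto
  define E where "E = {x\<in>space M. \<not> Q (V x)}"
  have "{x\<in>space ?F. V x \<in> space MV - {v\<in>space MV. Q v}} \<in> sets ?F"
    using Q by measurable
  moreover have "{x\<in>space ?F. V x \<in> space MV - {v\<in>space MV. Q v}} = E"
    using measurable_space[of V M MV] by (auto simp: E_def)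
  ultimately have EF: "E \<in> sets ?F" by simp
  have [measurable]: "E \<in> sets M" using EF F.subalg by (auto simp: subalgebra_def)
  have int_E\<rho>: "integrable M (\<lambda>x. indicator E x * \<rho> x)"
    using integrable_mult_indicator[OF _ \<rho>(1)] by simp
  have "(\<integral>x. indicator E x * \<pi> (V x) \<partial>M) = (\<integral>x. indicator E x * real_cond_exp M ?F \<rho> x \<partial>M)"
    using \<pi>(1) unfolding cexp_def by (intro integral_cong_AE) (auto elim!: eventually_mono)
  also have "\<dots> = (\<integral>x. indicator E x * \<rho> x \<partial>M)"
    using EF int_E\<rho> by (intro F.real_cond_exp_intg(2)) auto
  also have "\<dots> = 0"
    using hyp by (subst integral_eq_zero_AE) (auto elim!: eventually_mono simp: E_def indicator_def)
  finally have "(\<integral>x. indicator E x * \<pi> (V x) \<partial>M) = 0" .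
  moreover have "integrable M (\<lambda>x. indicator E x * \<pi> (V x))"
    using F.real_cond_exp_intg(1)[OF int_E\<rho>] EF \<pi>(1) unfolding cexp_def
    by (intro integrable_cong_AE_imp[OF F.real_cond_exp_intg(1)[OF int_E\<rho>]])
       (auto elim!: eventually_mono)
  ultimately have "AE x in M. indicator E x * \<pi> (V x) = 0"
    using \<pi>(2) by (subst integral_nonneg_eq_0_iff_AE[symmetric]) (auto elim!: eventually_mono)
  then show ?thesis
    using \<pi>(2) AE_space by eventually_elim (auto simp: E_def indicator_def)
qed

lemma real_cond_exp_binary_mixture:
  fixes R a c :: "'a \<Rightarrow> real"
  assumes "prob_space M" and "sigma_finite_subalgebra M F"
    and [measurable]: "a \<in> borel_measurable F" "c \<in> borel_measurable F" "R \<in> borel_measurable M"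
    and R01: "\<forall>\<omega>\<in>space M. R \<omega> \<in> {0, 1}"
    and int: "integrable M (\<lambda>\<omega>. a \<omega> * R \<omega> + c \<omega> * (1 - R \<omega>))"
  shows "AE \<omega> in M. real_cond_exp M F (\<lambda>\<omega>. a \<omega> * R \<omega> + c \<omega> * (1 - R \<omega>)) \<omega>
    = a \<omega> * real_cond_exp M F R \<omega> + c \<omega> * (1 - real_cond_exp M F R \<omega>)"
proof -
  interpret prob_space M by fact
  interpret F: sigma_finite_subalgebra M F by fact
  have [measurable]: "a \<in> borel_measurable M" "c \<in> borel_measurable M"
    by (auto intro: measurable_from_subalg[OF F.subalg])
  have int_R: "integrable M R"
    using R01 by (auto intro!: Bochner_Integration.integrable_bound[OF integrable_const[of "1::real"]] AE_I2)
  have int_aR: "integrable M (\<lambda>\<omega>. a \<omega> * R \<omega>)" and int_cR: "integrable M (\<lambda>\<omega>. c \<omega> * (1 - R \<omega>))"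
    using R01 by (auto intro!: Bochner_Integration.integrable_bound[OF int] AE_I2)
  have "AE \<omega> in M. real_cond_exp M F (\<lambda>\<omega>. a \<omega> * R \<omega> + c \<omega> * (1 - R \<omega>)) \<omega>
      = real_cond_exp M F (\<lambda>\<omega>. a \<omega> * R \<omega>) \<omega> + real_cond_exp M F (\<lambda>\<omega>. c \<omega> * (1 - R \<omega>)) \<omega>"
    by (rule F.real_cond_exp_add[OF int_aR int_cR])
  moreover have "AE \<omega> in M. real_cond_exp M F (\<lambda>\<omega>. a \<omega> * R \<omega>) \<omega> = a \<omega> * real_cond_exp M F R \<omega>"
    using int_aR by (intro F.real_cond_exp_mult) auto
  moreover have "AE \<omega> in M. real_cond_exp M F (\<lambda>\<omega>. c \<omega> * (1 - R \<omega>)) \<omega> = c \<omega> * real_cond_exp M F (\<lambda>\<omega>. 1 - R \<omega>) \<omega>"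
    using int_cR by (intro F.real_cond_exp_mult) auto
  moreover have "AE \<omega> in M. real_cond_exp M F (\<lambda>\<omega>. 1 - R \<omega>) \<omega> = 1 - real_cond_exp M F R \<omega>"
    using F.real_cond_exp_diff[OF integrable_const[of "1::real"] int_R(1)]
      F.real_cond_exp_F_meas[OF integrable_const[of "1::real"] borel_measurable_const]
    by eventually_elim simp
  ultimately show ?thesis by eventually_elim simp
qed

section \<open>Conditional independence\<close>

lemma integral_comp_pair_eq_if_rectangles:
  fixes g\<^sub>1 g\<^sub>2 :: "'a \<Rightarrow> real" and \<phi> :: "'c \<times> 'b \<Rightarrow> real"
  assumes [measurable]: "C \<in> M \<rightarrow>\<^sub>M MC" "B \<in> M \<rightarrow>\<^sub>M MB" "\<phi> \<in> MC \<Otimes>\<^sub>M MB \<rightarrow>\<^sub>M borel"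
    and g: "\<And>i. i \<in> {g\<^sub>1, g\<^sub>2} \<Longrightarrow> integrable M i \<and> (AE x in M. 0 \<le> i x)"
    and rect: "\<And>a b. a \<in> sets MC \<Longrightarrow> b \<in> sets MB \<Longrightarrow>
      (\<integral>x. g\<^sub>1 x * indicator {x\<in>space M. C x \<in> a \<and> B x \<in> b} x \<partial>M) =
      (\<integral>x. g\<^sub>2 x * indicator {x\<in>space M. C x \<in> a \<and> B x \<in> b} x \<partial>M)"
  shows "(\<integral>x. g\<^sub>1 x * \<phi> (C x, B x) \<partial>M) = (\<integral>x. g\<^sub>2 x * \<phi> (C x, B x) \<partial>M)"
proof -
  \<comment> \<open>the images of the measures with densities \<open>g\<^sub>1\<close>, \<open>g\<^sub>2\<close> under \<open>(C, B)\<close> agree on rectangles\<close>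
  define N where "N i = distr (density M (\<lambda>x. ennreal (i x))) (MC \<Otimes>\<^sub>M MB) (\<lambda>x. (C x, B x))" for i
  have [measurable]: "i \<in> borel_measurable M" if "i \<in> {g\<^sub>1, g\<^sub>2}" for i
    using g[OF that] by auto
  have N_rect: "emeasure (N i) (a \<times> b) =
      ennreal (\<integral>x. i x * indicator {x\<in>space M. C x \<in> a \<and> B x \<in> b} x \<partial>M)"
    if i: "i \<in> {g\<^sub>1, g\<^sub>2}" and [measurable]: "a \<in> sets MC" "b \<in> sets MB" for i a b
  proof -
    have [measurable]: "i \<in> borel_measurable M" using g[OF i] by auto
    have "(\<lambda>x. (C x, B x)) -` (a \<times> b) \<inter> space M = {x\<in>space M. C x \<in> a \<and> B x \<in> b}" by auto
    then have "emeasure (N i) (a \<times> b) =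
        emeasure (density M (\<lambda>x. ennreal (i x))) {x\<in>space M. C x \<in> a \<and> B x \<in> b}"
      unfolding N_def by (subst emeasure_distr) auto
    also have "\<dots> = (\<integral>\<^sup>+ x. ennreal (i x * indicator {x\<in>space M. C x \<in> a \<and> B x \<in> b} x) \<partial>M)"
      by (subst emeasure_density) (auto intro!: nn_integral_cong simp: indicator_def)
    also have "\<dots> = ennreal (\<integral>x. i x * indicator {x\<in>space M. C x \<in> a \<and> B x \<in> b} x \<partial>M)"
      using g[OF i]
      by (intro nn_integral_eq_integral integrable_real_mult_indicator)
         (auto elim!: eventually_mono simp: indicator_def)
    finally show ?thesis .
  qed
  have "N g\<^sub>1 = N g\<^sub>2"
  proof (rule measure_eqI_generator_eq[OF Int_stable_pair_measure_generator[of MC MB]])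
    show "{a \<times> b |a b. a \<in> sets MC \<and> b \<in> sets MB} \<subseteq> Pow (space MC \<times> space MB)"
      using sets.sets_into_space[of _ MC] sets.sets_into_space[of _ MB] by blast
    show "emeasure (N g\<^sub>1) X = emeasure (N g\<^sub>2) X"
      if "X \<in> {a \<times> b |a b. a \<in> sets MC \<and> b \<in> sets MB}" for X
    proof -
      from that obtain a b where "X = a \<times> b" "a \<in> sets MC" "b \<in> sets MB" by blast
      then show ?thesis using rect[of a b] N_rect[of g\<^sub>1 a b] N_rect[of g\<^sub>2 a b] by simp
    qed
    show "sets (N g\<^sub>1) = sigma_sets (space MC \<times> space MB) {a \<times> b |a b. a \<in> sets MC \<and> b \<in> sets MB}"
      "sets (N g\<^sub>2) = sigma_sets (space MC \<times> space MB) {a \<times> b |a b. a \<in> sets MC \<and> b \<in> sets MB}"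
      unfolding N_def sets_distr by (rule sets_pair_measure)+
    show "range (\<lambda>_. space MC \<times> space MB) \<subseteq> {a \<times> b |a b. a \<in> sets MC \<and> b \<in> sets MB}"
      by auto
    show "emeasure (N g\<^sub>1) (space MC \<times> space MB) \<noteq> \<infinity>"
      using N_rect[of g\<^sub>1 "space MC" "space MB"] by simp
  qed simp
  moreover have "integral\<^sup>L (N i) \<phi> = (\<integral>x. i x * \<phi> (C x, B x) \<partial>M)" if "i \<in> {g\<^sub>1, g\<^sub>2}" for i
    using g[OF that] unfolding N_def
    by (subst integral_distr) (auto simp: integral_density cong: measurable_cong_sets)
  ultimately show ?thesis by (metis insertI1 insertI2)
qed

lemma cond_indep_on_swap:
  "cond_indep_on M Q MA A MB B MC C \<Longrightarrow> cond_indep_on M Q MB B MA A MC C"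
  unfolding cond_indep_on_def
  by (simp add: conj_commute mult.commute)


lemma cond_indep_on_set_integral_indicator:
  assumes P: "prob_space M" and ci: "cond_indep_on M Q MA A MB B MC C"
    and [measurable]: "A \<in> M \<rightarrow>\<^sub>M MA" "B \<in> M \<rightarrow>\<^sub>M MB" "C \<in> M \<rightarrow>\<^sub>M MC" "S \<in> sets MA" "T \<in> sets MB"
    and E: "E \<in> sets (gen M MC C)" and EQ: "\<And>\<omega>. \<omega> \<in> E \<Longrightarrow> Q \<omega>"
  shows "(\<integral>\<omega>. indicator E \<omega> * indicator {x\<in>space M. A x \<in> S} \<omega> * indicator {x\<in>space M. B x \<in> T} \<omega> \<partial>M) =
    (\<integral>\<omega>. indicator E \<omega> * cexp M MC C (indicator {x\<in>space M. A x \<in> S}) \<omega> *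
      indicator {x\<in>space M. B x \<in> T} \<omega> \<partial>M)"
proof -
  interpret prob_space M by fact
  let ?F = "gen M MC C"
  interpret F: sigma_finite_subalgebra M ?F by (rule sigma_finite_subalgebra_gen[OF P]) measurable
  have [measurable]: "E \<in> sets M" using E F.subalg by (auto simp: subalgebra_def)
  have int_ind: "integrable M (indicator U :: 'a \<Rightarrow> real)" if "U \<in> sets M" for U
    using that by (intro integrable_real_indicator) (auto simp: less_top[symmetric])
  define p where "p = real_cond_exp M ?F (indicator {x\<in>space M. A x \<in> S})"
  have [measurable]: "p \<in> borel_measurable ?F" "p \<in> borel_measurable M" unfolding p_def by simp_all
  have "AE \<omega> in M. 0 \<le> p \<omega>" "AE \<omega> in M. p \<omega> \<le> 1"
    unfolding p_def by (intro F.real_cond_exp_ge_c F.real_cond_exp_le_c int_ind; simp)+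
  then have p_bound: "AE \<omega> in M. \<bar>indicator E \<omega> * p \<omega>\<bar> \<le> 1"
    by eventually_elim (auto simp: indicator_def)
  have "AE \<omega> in M. \<omega> \<in> E \<longrightarrow>
      real_cond_exp M ?F (indicator {x\<in>space M. A x \<in> S \<and> B x \<in> T}) \<omega> =
      p \<omega> * real_cond_exp M ?F (indicator {x\<in>space M. B x \<in> T}) \<omega>"
    using ci unfolding cond_indep_on_def p_def cexp_def
    by (auto elim!: eventually_mono dest!: bspec[of _ _ S] bspec[of _ _ T] intro: EQ)
  then have ci_E: "(\<integral>\<omega>. indicator E \<omega> * real_cond_exp M ?F (indicator {x\<in>space M. A x \<in> S \<and> B x \<in> T}) \<omega> \<partial>M)
      = (\<integral>\<omega>. (indicator E \<omega> * p \<omega>) * real_cond_exp M ?F (indicator {x\<in>space M. B x \<in> T}) \<omega> \<partial>M)"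
    by (intro integral_cong_AE) (auto elim!: eventually_mono simp: indicator_def)
  have "(\<integral>\<omega>. indicator E \<omega> * indicator {x\<in>space M. A x \<in> S} \<omega> * indicator {x\<in>space M. B x \<in> T} \<omega> \<partial>M)
      = (\<integral>\<omega>. (indicator E \<omega> * indicator {x\<in>space M. A x \<in> S \<and> B x \<in> T} \<omega> :: real) \<partial>M)"
    by (intro Bochner_Integration.integral_cong) (auto simp: indicator_def)
  also have "\<dots> = (\<integral>\<omega>. indicator E \<omega> *
      real_cond_exp M ?F (indicator {x\<in>space M. A x \<in> S \<and> B x \<in> T}) \<omega> \<partial>M)"
    using E by (intro F.real_cond_exp_intg(2)[symmetric]) (auto intro!: integrable_real_mult_indicator int_ind)
  also have "\<dots> = (\<integral>\<omega>. (indicator E \<omega> * p \<omega>) * indicator {x\<in>space M. B x \<in> T} \<omega> \<partial>M)"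
    unfolding ci_E using E p_bound
    by (intro F.real_cond_exp_intg(2) integrable_bounded_mult int_ind) auto
  finally show ?thesis by (simp add: p_def cexp_def)
qed

lemma cond_indep_on_set_integral:
  fixes \<phi> :: "'c \<times> 'b \<Rightarrow> real"
  assumes P: "prob_space M" and ci: "cond_indep_on M Q MA A MB B MC C"
    and [measurable]: "A \<in> M \<rightarrow>\<^sub>M MA" "B \<in> M \<rightarrow>\<^sub>M MB" "C \<in> M \<rightarrow>\<^sub>M MC"
      "S \<in> sets MA" "\<phi> \<in> MC \<Otimes>\<^sub>M MB \<rightarrow>\<^sub>M borel"
    and E: "E \<in> sets (gen M MC C)" and EQ: "\<And>\<omega>. \<omega> \<in> E \<Longrightarrow> Q \<omega>"
  shows "(\<integral>\<omega>. indicator E \<omega> * indicator {x\<in>space M. A x \<in> S} \<omega> * \<phi> (C \<omega>, B \<omega>) \<partial>M) =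
    (\<integral>\<omega>. indicator E \<omega> * cexp M MC C (indicator {x\<in>space M. A x \<in> S}) \<omega> * \<phi> (C \<omega>, B \<omega>) \<partial>M)"
proof -
  interpret prob_space M by fact
  let ?F = "gen M MC C"
  interpret F: sigma_finite_subalgebra M ?F by (rule sigma_finite_subalgebra_gen[OF P]) measurable
  have [measurable]: "C \<in> ?F \<rightarrow>\<^sub>M MC" by (rule measurable_generator_gen) measurable
  have [measurable]: "E \<in> sets M" using E F.subalg by (auto simp: subalgebra_def)
  define p where "p = cexp M MC C (indicator {x\<in>space M. A x \<in> S})"
  have [measurable]: "p \<in> borel_measurable M" unfolding p_def cexp_def by simp
  have int_A: "integrable M (indicator {x\<in>space M. A x \<in> S} :: 'a \<Rightarrow> real)"
    by (intro integrable_real_indicator) (auto simp: less_top[symmetric])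
  have "AE \<omega> in M. 0 \<le> p \<omega>" "AE \<omega> in M. p \<omega> \<le> 1"
    unfolding p_def cexp_def by (intro F.real_cond_exp_ge_c F.real_cond_exp_le_c int_A; simp)+
  then have p01: "AE \<omega> in M. 0 \<le> p \<omega> \<and> p \<omega> \<le> 1" by eventually_elim simp
  show ?thesis unfolding p_def[symmetric]
  proof (rule integral_comp_pair_eq_if_rectangles)
    have "integrable M (\<lambda>\<omega>. indicator E \<omega> * p \<omega>)"
      using F.real_cond_exp_int(1)[OF int_A] unfolding p_def cexp_def
      by (intro integrable_bounded_mult) (auto simp: indicator_def)
    moreover have "integrable M (\<lambda>\<omega>. indicator E \<omega> * indicator {x\<in>space M. A x \<in> S} \<omega> :: real)"
      by (rule integrable_bounded_mult[OF int_A]) (auto simp: indicator_def)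
    ultimately show "integrable M i \<and> (AE \<omega> in M. 0 \<le> i \<omega>)"
      if "i \<in> {\<lambda>\<omega>. indicator E \<omega> * indicator {x\<in>space M. A x \<in> S} \<omega>, \<lambda>\<omega>. indicator E \<omega> * p \<omega>}" for i
      using that p01 by (auto elim!: eventually_mono)
  next
    fix a b assume [measurable]: "a \<in> sets MC" "b \<in> sets MB"
    define E' where "E' = E \<inter> {\<omega>\<in>space M. C \<omega> \<in> a}"
    have "{\<omega>\<in>space ?F. C \<omega> \<in> a} \<in> sets ?F" by measurable
    then have E': "E' \<in> sets ?F" using sets.Int[OF E] by (simp add: E'_def)
    have "(\<integral>\<omega>. indicator E \<omega> * indicator {x\<in>space M. A x \<in> S} \<omega> *
          indicator {x\<in>space M. C x \<in> a \<and> B x \<in> b} \<omega> \<partial>M)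
        = (\<integral>\<omega>. (indicator E' \<omega> * indicator {x\<in>space M. A x \<in> S} \<omega> *
          indicator {x\<in>space M. B x \<in> b} \<omega> :: real) \<partial>M)"
      by (intro Bochner_Integration.integral_cong) (auto simp: E'_def indicator_def)
    also have "\<dots> = (\<integral>\<omega>. indicator E' \<omega> * p \<omega> * indicator {x\<in>space M. B x \<in> b} \<omega> \<partial>M)"
      using cond_indep_on_set_integral_indicator[OF P ci _ _ _ _ _ E'] EQ
      unfolding p_def by (auto simp: E'_def)
    also have "\<dots> = (\<integral>\<omega>. indicator E \<omega> * p \<omega> * indicator {x\<in>space M. C x \<in> a \<and> B x \<in> b} \<omega> \<partial>M)"
      by (intro Bochner_Integration.integral_cong) (auto simp: E'_def indicator_def)
    finally show "(\<integral>\<omega>. indicator E \<omega> * indicator {x\<in>space M. A x \<in> S} \<omega> *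
          indicator {x\<in>space M. C x \<in> a \<and> B x \<in> b} \<omega> \<partial>M) =
        (\<integral>\<omega>. indicator E \<omega> * p \<omega> * indicator {x\<in>space M. C x \<in> a \<and> B x \<in> b} \<omega> \<partial>M)" .
  qed measurable
qed

lemma cond_indep_on_real_cond_exp:
  fixes \<phi> :: "'c \<times> 'b \<Rightarrow> real"
  assumes P: "prob_space M" and ci: "cond_indep_on M Q MA A MB B MC C"
    and [measurable]: "A \<in> M \<rightarrow>\<^sub>M MA" "B \<in> M \<rightarrow>\<^sub>M MB" "C \<in> M \<rightarrow>\<^sub>M MC"
      "S \<in> sets MA" "\<phi> \<in> MC \<Otimes>\<^sub>M MB \<rightarrow>\<^sub>M borel"
    and Q: "{\<omega>\<in>space M. Q \<omega>} \<in> sets (gen M MC C)"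
    and int: "integrable M (\<lambda>\<omega>. \<phi> (C \<omega>, B \<omega>))"
  shows "AE \<omega> in M. Q \<omega> \<longrightarrow>
    cexp M MC C (\<lambda>\<omega>. indicator {x\<in>space M. A x \<in> S} \<omega> * \<phi> (C \<omega>, B \<omega>)) \<omega> =
    cexp M MC C (indicator {x\<in>space M. A x \<in> S}) \<omega> * cexp M MC C (\<lambda>\<omega>. \<phi> (C \<omega>, B \<omega>)) \<omega>"
proof -
  interpret prob_space M by fact
  let ?F = "gen M MC C"
  interpret F: sigma_finite_subalgebra M ?F by (rule sigma_finite_subalgebra_gen[OF P]) measurable
  define Qs where "Qs = {\<omega>\<in>space M. Q \<omega>}"
  define I where "I = (indicator {x\<in>space M. A x \<in> S} :: 'a \<Rightarrow> real)"
  define f where "f \<omega> = \<phi> (C \<omega>, B \<omega>)" for \<omega>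
  define p where "p = real_cond_exp M ?F I"
  have sets_F: "T \<in> sets M" if "T \<in> sets ?F" for T
    using that F.subalg by (auto simp: subalgebra_def)
  have QsF [measurable]: "Qs \<in> sets ?F" using Q by (simp add: Qs_def)
  have [measurable]: "Qs \<in> sets M" by (rule sets_F[OF QsF])
  have [measurable]: "I \<in> borel_measurable M" "f \<in> borel_measurable M"
      "p \<in> borel_measurable ?F" "p \<in> borel_measurable M"
    unfolding I_def f_def p_def by simp_all
  have int_I: "integrable M I"
    unfolding I_def by (intro integrable_real_indicator) (auto simp: less_top[symmetric])
  have "AE \<omega> in M. 0 \<le> p \<omega>" "AE \<omega> in M. p \<omega> \<le> 1"
    unfolding p_def
    by (intro F.real_cond_exp_ge_c F.real_cond_exp_le_c int_I; simp add: I_def)+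
  then have p_bound: "AE \<omega> in M. \<bar>indicator T \<omega> * p \<omega>\<bar> \<le> 1" for T
    by eventually_elim (auto simp: indicator_def)
  have int_If: "integrable M (\<lambda>\<omega>. I \<omega> * f \<omega>)"
    using int by (intro integrable_bounded_mult) (auto simp: I_def f_def indicator_def)
  have "AE \<omega> in M. real_cond_exp M ?F (\<lambda>\<omega>. indicator Qs \<omega> * (I \<omega> * f \<omega>)) \<omega>
      = indicator Qs \<omega> * p \<omega> * real_cond_exp M ?F f \<omega>"
  proof (rule F.real_cond_exp_charact)
    fix E assume E: "E \<in> sets ?F"
    then have EQ: "E \<inter> Qs \<in> sets ?F" by (intro sets.Int QsF)
    have [measurable]: "E \<inter> Qs \<in> sets M" by (rule sets_F[OF EQ])
    have "(\<integral>\<omega>\<in>E. indicator Qs \<omega> * (I \<omega> * f \<omega>) \<partial>M) = (\<integral>\<omega>. indicator (E \<inter> Qs) \<omega> * I \<omega> * f \<omega> \<partial>M)"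
      by (simp add: set_lebesgue_integral_def indicator_inter_arith mult_ac)
    also have "\<dots> = (\<integral>\<omega>. (indicator (E \<inter> Qs) \<omega> * p \<omega>) * f \<omega> \<partial>M)"
      using cond_indep_on_set_integral[OF P ci _ _ _ _ _ EQ]
      unfolding I_def f_def p_def cexp_def by (auto simp: Qs_def)
    also have "\<dots> = (\<integral>\<omega>. (indicator (E \<inter> Qs) \<omega> * p \<omega>) * real_cond_exp M ?F f \<omega> \<partial>M)"
      using EQ int p_bound unfolding f_def
      by (intro F.real_cond_exp_intg(2)[symmetric] integrable_bounded_mult) auto
    also have "\<dots> = (\<integral>\<omega>\<in>E. indicator Qs \<omega> * p \<omega> * real_cond_exp M ?F f \<omega> \<partial>M)"
      by (simp add: set_lebesgue_integral_def indicator_inter_arith mult_ac)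
    finally show "(\<integral>\<omega>\<in>E. indicator Qs \<omega> * (I \<omega> * f \<omega>) \<partial>M) =
        (\<integral>\<omega>\<in>E. indicator Qs \<omega> * p \<omega> * real_cond_exp M ?F f \<omega> \<partial>M)" .
  next
    show "integrable M (\<lambda>\<omega>. indicator Qs \<omega> * (I \<omega> * f \<omega>))"
      by (rule integrable_bounded_mult[OF int_If]) (auto simp: indicator_def)
    show "integrable M (\<lambda>\<omega>. indicator Qs \<omega> * p \<omega> * real_cond_exp M ?F f \<omega>)"
      using F.real_cond_exp_int(1)[OF int] p_bound unfolding f_def
      by (intro integrable_bounded_mult) auto
  qed simp
  moreover have "AE \<omega> in M. real_cond_exp M ?F (\<lambda>\<omega>. indicator Qs \<omega> * (I \<omega> * f \<omega>)) \<omega>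
      = indicator Qs \<omega> * real_cond_exp M ?F (\<lambda>\<omega>. I \<omega> * f \<omega>) \<omega>"
    using int_If by (intro F.real_cond_exp_mult) (auto intro: integrable_bounded_mult simp: indicator_def)
  ultimately have "AE \<omega> in M. indicator Qs \<omega> * real_cond_exp M ?F (\<lambda>\<omega>. I \<omega> * f \<omega>) \<omega>
      = indicator Qs \<omega> * p \<omega> * real_cond_exp M ?F f \<omega>"
    by eventually_elim simp
  then show ?thesis
    using AE_space unfolding cexp_def Qs_def I_def f_def p_def
    by eventually_elim (auto simp: indicator_def)
qed

section \<open>Binary treatments\<close>

lemma real_cond_exp_potential_outcome:
  fixes C :: "'a \<Rightarrow> 'c" and X Y Y\<^sub>x :: "'a \<Rightarrow> real" and \<phi> :: "real \<times> 'c \<Rightarrow> real"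
  assumes P: "prob_space M"
    and [measurable]: "C \<in> M \<rightarrow>\<^sub>M MC" "X \<in> borel_measurable M" "\<phi> \<in> borel \<Otimes>\<^sub>M MC \<rightarrow>\<^sub>M borel"
    and int: "integrable M Y" "integrable M Y\<^sub>x"
    and ci: "cond_indep_on M (\<lambda>_. True) borel Y\<^sub>x borel X MC C"
    and consistency: "\<And>\<omega>. \<omega> \<in> space M \<Longrightarrow> X \<omega> = x \<Longrightarrow> Y \<omega> = Y\<^sub>x \<omega>"
    and outcome_model: "AE \<omega> in M. cexp M (borel \<Otimes>\<^sub>M MC) (\<lambda>\<omega>. (X \<omega>, C \<omega>)) Y \<omega> = \<phi> (X \<omega>, C \<omega>)"
    and positivity: "AE \<omega> in M. cexp M MC C (indicator {\<omega>\<in>space M. X \<omega> = x}) \<omega> \<noteq> 0"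
  shows "AE \<omega> in M. cexp M MC C Y\<^sub>x \<omega> = \<phi> (x, C \<omega>)"
proof -
  interpret prob_space M by fact
  let ?F = "gen M MC C" and ?G = "gen M (borel \<Otimes>\<^sub>M MC) (\<lambda>\<omega>. (X \<omega>, C \<omega>))"
  interpret F: sigma_finite_subalgebra M ?F by (rule sigma_finite_subalgebra_gen[OF P]) measurable
  interpret G: sigma_finite_subalgebra M ?G by (rule sigma_finite_subalgebra_gen[OF P]) measurable
  have FG: "subalgebra ?G ?F" by (rule subalgebra_gen_gen[where \<phi> = snd]) auto
  have [measurable]: "X \<in> borel_measurable ?G" by (rule measurable_gen[where \<phi> = fst]) auto
  have [measurable]: "C \<in> ?F \<rightarrow>\<^sub>M MC" by (rule measurable_gen[where \<phi> = id]) auto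
  define I where "I = (indicator {\<omega>\<in>space M. X \<omega> = x} :: 'a \<Rightarrow> real)"
  have "{\<omega>\<in>space ?G. X \<omega> = x} \<in> sets ?G" by measurable
  then have [measurable]: "I \<in> borel_measurable ?G" "I \<in> borel_measurable M"
    unfolding I_def by (auto intro: borel_measurable_indicator)
  have int_IY: "integrable M (\<lambda>\<omega>. I \<omega> * Y \<omega>)"
    using int by (intro integrable_bounded_mult) (auto simp: I_def indicator_def)
  have "AE \<omega> in M. real_cond_exp M ?G (\<lambda>\<omega>. I \<omega> * Y \<omega>) \<omega> = I \<omega> * real_cond_exp M ?G Y \<omega>"
    using int_IY int by (intro G.real_cond_exp_mult) auto
  then have E_IY_G: "AE \<omega> in M. real_cond_exp M ?G (\<lambda>\<omega>. I \<omega> * Y \<omega>) \<omega> = \<phi> (x, C \<omega>) * I \<omega>"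
    using outcome_model unfolding cexp_def by eventually_elim (auto simp: I_def indicator_def)
  have int_\<phi>I: "integrable M (\<lambda>\<omega>. \<phi> (x, C \<omega>) * I \<omega>)"
    by (rule integrable_cong_AE_imp[OF G.real_cond_exp_int(1)[OF int_IY] _ E_IY_G]) measurable
  have "AE \<omega> in M. real_cond_exp M ?F (\<lambda>\<omega>. I \<omega> * Y \<omega>) \<omega> = real_cond_exp M ?F (\<lambda>\<omega>. \<phi> (x, C \<omega>) * I \<omega>) \<omega>"
  proof -
    have "AE \<omega> in M. real_cond_exp M ?F (real_cond_exp M ?G (\<lambda>\<omega>. I \<omega> * Y \<omega>)) \<omega>
        = real_cond_exp M ?F (\<lambda>\<omega>. \<phi> (x, C \<omega>) * I \<omega>) \<omega>"
      using E_IY_G by (intro F.real_cond_exp_cong) auto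
    then show ?thesis
      using F.real_cond_exp_nested_subalg[OF G.subalg FG int_IY] by eventually_elim simp
  qed
  moreover have "AE \<omega> in M. real_cond_exp M ?F (\<lambda>\<omega>. \<phi> (x, C \<omega>) * I \<omega>) \<omega> = \<phi> (x, C \<omega>) * real_cond_exp M ?F I \<omega>"
    using int_\<phi>I by (intro F.real_cond_exp_mult) auto
  moreover have "AE \<omega> in M. real_cond_exp M ?F (\<lambda>\<omega>. I \<omega> * Y \<omega>) \<omega> = real_cond_exp M ?F (\<lambda>\<omega>. I \<omega> * Y\<^sub>x \<omega>) \<omega>"
    using int by (intro F.real_cond_exp_cong AE_I2) (auto simp: I_def indicator_def consistency)
  moreover have "AE \<omega> in M. real_cond_exp M ?F (\<lambda>\<omega>. I \<omega> * Y\<^sub>x \<omega>) \<omega> = real_cond_exp M ?F I \<omega> * real_cond_exp M ?F Y\<^sub>x \<omega>"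
    using cond_indep_on_real_cond_exp[OF P cond_indep_on_swap[OF ci], of "{x}" snd] int sets.top[of ?F]
    by (simp add: cexp_def I_def)
  ultimately show ?thesis
    using positivity unfolding cexp_def I_def by eventually_elim simp
qed


lemma real_cond_exp_centered_treatment_outcome:
  fixes X Y w b e \<mu> :: "'a \<Rightarrow> real"
  assumes P: "prob_space M"
    and sub: "subalgebra M G'" "subalgebra G' G" "subalgebra G F"
    and [measurable]: "X \<in> borel_measurable G'" "w \<in> borel_measurable G" "b \<in> borel_measurable F"
      "\<mu> \<in> borel_measurable F" "e \<in> borel_measurable M"
    and X01: "\<forall>\<omega>\<in>space M. X \<omega> \<in> {0, 1}"
    and int: "integrable M Y" "integrable M w"
    and outcome: "AE \<omega> in M. real_cond_exp M G' Y \<omega> = w \<omega> + b \<omega> * X \<omega>"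
    and e: "AE \<omega> in M. real_cond_exp M G X \<omega> = e \<omega>"
    and \<mu>: "AE \<omega> in M. real_cond_exp M F X \<omega> = \<mu> \<omega>"
  shows "AE \<omega> in M. real_cond_exp M F (\<lambda>\<omega>. (X \<omega> - \<mu> \<omega>) * Y \<omega>) \<omega> =
    real_cond_exp M F (\<lambda>\<omega>. e \<omega> * w \<omega>) \<omega> - \<mu> \<omega> * real_cond_exp M F w \<omega> + b \<omega> * \<mu> \<omega> * (1 - \<mu> \<omega>)"
proof -
  interpret prob_space M by fact
  have subM: "subalgebra M G" "subalgebra M F" "subalgebra G' F"
    using sub by (auto simp: subalgebra_def)
  interpret G': sigma_finite_subalgebra M G' by (rule sigma_finite_subalgebra_if_prob_space[OF P sub(1)])
  interpret F: sigma_finite_subalgebra M F by (rule sigma_finite_subalgebra_if_prob_space[OF P subM(2)])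
  have [measurable]: "X \<in> borel_measurable M" "w \<in> borel_measurable M" "w \<in> borel_measurable G'"
      "b \<in> borel_measurable G'" "\<mu> \<in> borel_measurable G'" "b \<in> borel_measurable M" "\<mu> \<in> borel_measurable M"
    using sub subM by (auto intro: measurable_from_subalg)
  have [measurable]: "Y \<in> borel_measurable M" using int(1) by auto
  have int_X: "integrable M X"
    using X01 by (intro Bochner_Integration.integrable_bound[OF integrable_const[of "1::real"]])
      (auto intro!: AE_I2)
  have "AE \<omega> in M. 0 \<le> real_cond_exp M F X \<omega>" "AE \<omega> in M. real_cond_exp M F X \<omega> \<le> 1"
    using X01 by (intro F.real_cond_exp_ge_c F.real_cond_exp_le_c int_X; force)+
  with \<mu> have \<mu>01: "AE \<omega> in M. 0 \<le> \<mu> \<omega> \<and> \<mu> \<omega> \<le> 1" by eventually_elim simp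
  have int_m: "integrable M (\<lambda>\<omega>. w \<omega> + b \<omega> * X \<omega>)"
    by (rule integrable_cong_AE_imp[OF G'.real_cond_exp_int(1)[OF int(1)] _ outcome]) measurable
  then have int_bX: "integrable M (\<lambda>\<omega>. b \<omega> * X \<omega>)"
    using Bochner_Integration.integrable_diff[OF int_m int(2)] by simp
  have "AE \<omega> in M. \<bar>X \<omega> - \<mu> \<omega>\<bar> \<le> 1 \<and> \<bar>\<mu> \<omega>\<bar> \<le> 1 \<and> \<bar>1 - \<mu> \<omega>\<bar> \<le> 1"
    using \<mu>01 AE_space by eventually_elim (use X01 in auto)
  then have bounds: "AE \<omega> in M. \<bar>X \<omega> - \<mu> \<omega>\<bar> \<le> 1" "AE \<omega> in M. \<bar>\<mu> \<omega>\<bar> \<le> 1"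
      "AE \<omega> in M. \<bar>1 - \<mu> \<omega>\<bar> \<le> 1"
    by (auto elim: eventually_mono)
  have int_\<eta>Y: "integrable M (\<lambda>\<omega>. (X \<omega> - \<mu> \<omega>) * Y \<omega>)"
    using bounds(1) by (intro integrable_bounded_mult int) auto
  have "AE \<omega> in M. \<bar>X \<omega>\<bar> \<le> 1" using X01 by (auto intro!: AE_I2)
  then have "integrable M (\<lambda>\<omega>. X \<omega> * w \<omega>)" by (intro integrable_bounded_mult int) auto
  then have int_wX: "integrable M (\<lambda>\<omega>. w \<omega> * X \<omega>)" by (simp add: mult.commute)
  have int_\<mu>w: "integrable M (\<lambda>\<omega>. \<mu> \<omega> * w \<omega>)"
    using bounds(2) by (intro integrable_bounded_mult int) auto
  have "integrable M (\<lambda>\<omega>. (1 - \<mu> \<omega>) * (b \<omega> * X \<omega>))"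
    using bounds(3) by (intro integrable_bounded_mult int_bX) auto
  then have int_\<mu>bX: "integrable M (\<lambda>\<omega>. (1 - \<mu> \<omega>) * b \<omega> * X \<omega>)"
    by (simp add: mult.assoc)
  \<comment> \<open>given \<open>G'\<close>, \<open>(X - \<mu>) Y\<close> may be replaced by \<open>(X - \<mu>) (w + b X) = w X - \<mu> w + (1 - \<mu>) b X\<close>, as \<open>X\<^sup>2 = X\<close>\<close>
  have "AE \<omega> in M. real_cond_exp M F (\<lambda>\<omega>. (X \<omega> - \<mu> \<omega>) * Y \<omega>) \<omega>
      = real_cond_exp M F (\<lambda>\<omega>. (X \<omega> - \<mu> \<omega>) * (w \<omega> + b \<omega> * X \<omega>)) \<omega>"
    by (rule real_cond_exp_tower_mult[OF P sub(1) subM(3) _ _ _ int_\<eta>Y outcome]; measurable)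
  moreover have "AE \<omega> in M. real_cond_exp M F (\<lambda>\<omega>. (X \<omega> - \<mu> \<omega>) * (w \<omega> + b \<omega> * X \<omega>)) \<omega>
      = real_cond_exp M F (\<lambda>\<omega>. w \<omega> * X \<omega> - \<mu> \<omega> * w \<omega> + (1 - \<mu> \<omega>) * b \<omega> * X \<omega>) \<omega>"
    by (intro F.real_cond_exp_cong AE_I2) (use X01 in \<open>auto simp: algebra_simps\<close>)
  moreover have "AE \<omega> in M. real_cond_exp M F (\<lambda>\<omega>. w \<omega> * X \<omega> - \<mu> \<omega> * w \<omega> + (1 - \<mu> \<omega>) * b \<omega> * X \<omega>) \<omega>
      = real_cond_exp M F (\<lambda>\<omega>. w \<omega> * X \<omega>) \<omega> - real_cond_exp M F (\<lambda>\<omega>. \<mu> \<omega> * w \<omega>) \<omega>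
        + real_cond_exp M F (\<lambda>\<omega>. (1 - \<mu> \<omega>) * b \<omega> * X \<omega>) \<omega>"
    using F.real_cond_exp_add[OF Bochner_Integration.integrable_diff[OF int_wX int_\<mu>w] int_\<mu>bX]
      F.real_cond_exp_diff[OF int_wX int_\<mu>w] by eventually_elim simp
  moreover have "AE \<omega> in M. real_cond_exp M F (\<lambda>\<omega>. \<mu> \<omega> * w \<omega>) \<omega> = \<mu> \<omega> * real_cond_exp M F w \<omega>"
    using int_\<mu>w by (intro F.real_cond_exp_mult) auto
  moreover have "AE \<omega> in M. real_cond_exp M F (\<lambda>\<omega>. (1 - \<mu> \<omega>) * b \<omega> * X \<omega>) \<omega>
      = (1 - \<mu> \<omega>) * b \<omega> * real_cond_exp M F X \<omega>"
    using int_\<mu>bX by (intro F.real_cond_exp_mult) auto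
  moreover have "AE \<omega> in M. real_cond_exp M F (\<lambda>\<omega>. w \<omega> * X \<omega>) \<omega> = real_cond_exp M F (\<lambda>\<omega>. w \<omega> * e \<omega>) \<omega>"
    by (rule real_cond_exp_tower_mult[OF P subM(1) sub(3) _ _ _ int_wX e]; measurable)
  ultimately show ?thesis using \<mu> by eventually_elim (simp add: algebra_simps)
qed

section \<open>The data-fusion model\<close>

locale iv_fusion_model =
  fixes M :: "'a measure" and MV :: "'v measure" and MU :: "'u measure"
    and R X Z Y Y0 Y1 :: "'a \<Rightarrow> real" and V :: "'a \<Rightarrow> 'v" and U :: "'a \<Rightarrow> 'u"
    and eps :: "real \<Rightarrow> 'v \<Rightarrow> 'u \<Rightarrow> real"
    and zeta0 zeta :: "'v \<Rightarrow> 'u \<Rightarrow> real" and beta :: "'v \<Rightarrow> real \<Rightarrow> real"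
    and om :: "'v \<Rightarrow> real" and mu :: "'v \<Rightarrow> real \<Rightarrow> real"
    and gY gX :: "real \<Rightarrow> 'v \<Rightarrow> real"
    and ce cz cp :: "'v \<Rightarrow> real \<Rightarrow> real" and xi :: "'v \<Rightarrow> real"
  assumes P: "prob_space M"
    and mR: "R \<in> borel_measurable M" and mX: "X \<in> borel_measurable M"
    and mZ: "Z \<in> borel_measurable M" and mY: "Y \<in> borel_measurable M"
    and mV: "V \<in> M \<rightarrow>\<^sub>M MV" and mU: "U \<in> M \<rightarrow>\<^sub>M MU"
    and R01: "\<forall>\<omega>\<in>space M. R \<omega> \<in> {0, 1}"
    and X01: "\<forall>\<omega>\<in>space M. X \<omega> \<in> {0, 1}"
    and Z01: "\<forall>\<omega>\<in>space M. Z \<omega> \<in> {0, 1}"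
    and intY: "integrable M Y" and intY0: "integrable M Y0" and intY1: "integrable M Y1"
    and consist: "\<forall>\<omega>\<in>space M. Y \<omega> = X \<omega> * Y1 \<omega> + (1 - X \<omega>) * Y0 \<omega>"
    and A1_0: "cond_indep_on M (\<lambda>_. True) borel Y0 borel X (MV \<Otimes>\<^sub>M MU \<Otimes>\<^sub>M borel)
                 (\<lambda>\<omega>. (V \<omega>, U \<omega>, R \<omega>))"
    and A1_1: "cond_indep_on M (\<lambda>_. True) borel Y1 borel X (MV \<Otimes>\<^sub>M MU \<Otimes>\<^sub>M borel)
                 (\<lambda>\<omega>. (V \<omega>, U \<omega>, R \<omega>))"
    and A2_U: "cond_indep_on M (\<lambda>\<omega>. R \<omega> = 1) borel Z MU U (MV \<Otimes>\<^sub>M borel) (\<lambda>\<omega>. (V \<omega>, R \<omega>))"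
    and A2_Y: "cond_indep_on M (\<lambda>\<omega>. R \<omega> = 1) borel Z borel Y
                 (borel \<Otimes>\<^sub>M MV \<Otimes>\<^sub>M MU \<Otimes>\<^sub>M borel) (\<lambda>\<omega>. (X \<omega>, V \<omega>, U \<omega>, R \<omega>))"
    and mgY: "(\<lambda>(z, v). gY z v) \<in> borel \<Otimes>\<^sub>M MV \<rightarrow>\<^sub>M borel"
    and mgX: "(\<lambda>(z, v). gX z v) \<in> borel \<Otimes>\<^sub>M MV \<rightarrow>\<^sub>M borel"
    and gY: "AE \<omega> in M. R \<omega> = 1 \<longrightarrow>
               cexp M (borel \<Otimes>\<^sub>M MV \<Otimes>\<^sub>M borel) (\<lambda>\<omega>. (Z \<omega>, V \<omega>, R \<omega>)) Y \<omega> = gY (Z \<omega>) (V \<omega>)"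
    and gX: "AE \<omega> in M. R \<omega> = 1 \<longrightarrow>
               cexp M (borel \<Otimes>\<^sub>M MV \<Otimes>\<^sub>M borel) (\<lambda>\<omega>. (Z \<omega>, V \<omega>, R \<omega>)) X \<omega> = gX (Z \<omega>) (V \<omega>)"
    and Zpos: "AE \<omega> in M. R \<omega> = 1 \<longrightarrow>
               0 < cexp M (MV \<Otimes>\<^sub>M borel) (\<lambda>\<omega>. (V \<omega>, R \<omega>)) (indicator {x\<in>space M. Z x = 1}) \<omega> \<and>
               cexp M (MV \<Otimes>\<^sub>M borel) (\<lambda>\<omega>. (V \<omega>, R \<omega>)) (indicator {x\<in>space M. Z x = 1}) \<omega> < 1"
    and relevance: "AE \<omega> in M. R \<omega> = 1 \<longrightarrow> gX 1 (V \<omega>) \<noteq> gX 0 (V \<omega>)"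
    and mzeta0: "(\<lambda>(v, u). zeta0 v u) \<in> MV \<Otimes>\<^sub>M MU \<rightarrow>\<^sub>M borel"
    and mzeta: "(\<lambda>(v, u). zeta v u) \<in> MV \<Otimes>\<^sub>M MU \<rightarrow>\<^sub>M borel"
    and mbeta: "(\<lambda>(v, r). beta v r) \<in> MV \<Otimes>\<^sub>M borel \<rightarrow>\<^sub>M borel"
    and model: "AE \<omega> in M.
       cexp M (borel \<Otimes>\<^sub>M MV \<Otimes>\<^sub>M MU \<Otimes>\<^sub>M borel) (\<lambda>\<omega>. (X \<omega>, V \<omega>, U \<omega>, R \<omega>)) Y \<omega> =
         zeta0 (V \<omega>) (U \<omega>) + zeta (V \<omega>) (U \<omega>) * R \<omega> + beta (V \<omega>) (R \<omega>) * X \<omega>"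
    and meps: "(\<lambda>(r, v, u). eps r v u) \<in> borel \<Otimes>\<^sub>M MV \<Otimes>\<^sub>M MU \<rightarrow>\<^sub>M borel"
    and eps: "AE \<omega> in M. cexp M (MV \<Otimes>\<^sub>M MU \<Otimes>\<^sub>M borel) (\<lambda>\<omega>. (V \<omega>, U \<omega>, R \<omega>)) X \<omega>
                = eps (R \<omega>) (V \<omega>) (U \<omega>)"
    and Xpos: "AE \<omega> in M. 0 < eps (R \<omega>) (V \<omega>) (U \<omega>) \<and> eps (R \<omega>) (V \<omega>) (U \<omega>) < 1"
    and mom: "om \<in> MV \<rightarrow>\<^sub>M borel"
    and om: "AE \<omega> in M. cexp M MV V R \<omega> = om (V \<omega>)"
    and overlap: "AE \<omega> in M. 0 < om (V \<omega>) \<and> om (V \<omega>) < 1"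
    and mmu: "(\<lambda>(v, r). mu v r) \<in> MV \<Otimes>\<^sub>M borel \<rightarrow>\<^sub>M borel"
    and mu: "AE \<omega> in M. cexp M (MV \<Otimes>\<^sub>M borel) (\<lambda>\<omega>. (V \<omega>, R \<omega>)) X \<omega> = mu (V \<omega>) (R \<omega>)"
    and sig0pos: "AE \<omega> in M. 0 < sig2 mu (V \<omega>) 0"
    and int_z: "integrable M (\<lambda>\<omega>. zeta0 (V \<omega>) (U \<omega>) + zeta (V \<omega>) (U \<omega>) * R \<omega>)"
    and mce: "(\<lambda>(v, r). ce v r) \<in> MV \<Otimes>\<^sub>M borel \<rightarrow>\<^sub>M borel"
    and mcz: "(\<lambda>(v, r). cz v r) \<in> MV \<Otimes>\<^sub>M borel \<rightarrow>\<^sub>M borel"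
    and mcp: "(\<lambda>(v, r). cp v r) \<in> MV \<Otimes>\<^sub>M borel \<rightarrow>\<^sub>M borel"
    and ce: "AE \<omega> in M. cexp M (MV \<Otimes>\<^sub>M borel) (\<lambda>\<omega>. (V \<omega>, R \<omega>))
               (\<lambda>\<omega>. eps (R \<omega>) (V \<omega>) (U \<omega>)) \<omega> = ce (V \<omega>) (R \<omega>)"
    and cz: "AE \<omega> in M. cexp M (MV \<Otimes>\<^sub>M borel) (\<lambda>\<omega>. (V \<omega>, R \<omega>))
               (\<lambda>\<omega>. zeta0 (V \<omega>) (U \<omega>) + zeta (V \<omega>) (U \<omega>) * R \<omega>) \<omega> = cz (V \<omega>) (R \<omega>)"
    and cp: "AE \<omega> in M. cexp M (MV \<Otimes>\<^sub>M borel) (\<lambda>\<omega>. (V \<omega>, R \<omega>))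
               (\<lambda>\<omega>. eps (R \<omega>) (V \<omega>) (U \<omega>) * (zeta0 (V \<omega>) (U \<omega>) + zeta (V \<omega>) (U \<omega>) * R \<omega>)) \<omega>
             = cp (V \<omega>) (R \<omega>)"
    and xi: "\<And>v. xi v = (cp v 0 - ce v 0 * cz v 0) - (cp v 1 - ce v 1 * cz v 1)"
    and int_eta: "integrable M (\<lambda>\<omega>. (X \<omega> - mu (V \<omega>) (R \<omega>)) * Y \<omega> /
                    (fRV om (R \<omega>) (V \<omega>) * sig2 mu (V \<omega>) 0))"
begin

sublocale prob_space M by (rule P)

abbreviation "F_V \<equiv> gen M MV V"
abbreviation "F_VR \<equiv> gen M (MV \<Otimes>\<^sub>M borel) (\<lambda>\<omega>. (V \<omega>, R \<omega>))"
abbreviation "F_VUR \<equiv> gen M (MV \<Otimes>\<^sub>M MU \<Otimes>\<^sub>M borel) (\<lambda>\<omega>. (V \<omega>, U \<omega>, R \<omega>))"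
abbreviation "F_XVUR \<equiv> gen M (borel \<Otimes>\<^sub>M MV \<Otimes>\<^sub>M MU \<Otimes>\<^sub>M borel) (\<lambda>\<omega>. (X \<omega>, V \<omega>, U \<omega>, R \<omega>))"
abbreviation "F_ZVR \<equiv> gen M (borel \<Otimes>\<^sub>M MV \<Otimes>\<^sub>M borel) (\<lambda>\<omega>. (Z \<omega>, V \<omega>, R \<omega>))"

abbreviation arm :: "real \<Rightarrow> 'a \<Rightarrow> real"
  where "arm z \<equiv> indicator {\<omega>\<in>space M. R \<omega> = 1 \<and> Z \<omega> = z}"

declare mR [measurable] mX [measurable] mZ [measurable] mY [measurable] mV [measurable] mU [measurable]
  mzeta0 [measurable] mzeta [measurable] mbeta [measurable] mmu [measurable] mom [measurable]
  mgY [measurable] mgX [measurable] mce [measurable] mcz [measurable] mcp [measurable]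

lemma integrable_treatment: "integrable M X"
  using X01 by (intro Bochner_Integration.integrable_bound[OF integrable_const[of "1::real"]]) (auto intro!: AE_I2)

lemma integrable_source: "integrable M R"
  using R01 by (intro Bochner_Integration.integrable_bound[OF integrable_const[of "1::real"]]) (auto intro!: AE_I2)

lemma measurable_potential_outcomes [measurable]: "Y0 \<in> borel_measurable M" "Y1 \<in> borel_measurable M"
  using intY0 intY1 by auto

lemma measurable_generators [measurable]:
  "V \<in> F_V \<rightarrow>\<^sub>M MV"
  "(\<lambda>\<omega>. (V \<omega>, R \<omega>)) \<in> F_VR \<rightarrow>\<^sub>M MV \<Otimes>\<^sub>M borel"
  "(\<lambda>\<omega>. (V \<omega>, U \<omega>, R \<omega>)) \<in> F_VUR \<rightarrow>\<^sub>M MV \<Otimes>\<^sub>M MU \<Otimes>\<^sub>M borel"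
  "(\<lambda>\<omega>. (X \<omega>, V \<omega>, U \<omega>, R \<omega>)) \<in> F_XVUR \<rightarrow>\<^sub>M borel \<Otimes>\<^sub>M MV \<Otimes>\<^sub>M MU \<Otimes>\<^sub>M borel"
  "(\<lambda>\<omega>. (Z \<omega>, V \<omega>, R \<omega>)) \<in> F_ZVR \<rightarrow>\<^sub>M borel \<Otimes>\<^sub>M MV \<Otimes>\<^sub>M borel"
  by (rule measurable_generator_gen; measurable)+

lemma measurable_eps [measurable (raw)]:
  "f \<in> N \<rightarrow>\<^sub>M borel \<Longrightarrow> g \<in> N \<rightarrow>\<^sub>M MV \<Longrightarrow> h \<in> N \<rightarrow>\<^sub>M MU \<Longrightarrow>
    (\<lambda>x. eps (f x) (g x) (h x)) \<in> borel_measurable N"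
  using measurable_compose[OF measurable_Pair[OF _ measurable_Pair] meps] by simp

lemma measurable_wald [measurable (raw)]:
  assumes [measurable]: "f \<in> N \<rightarrow>\<^sub>M MV"
  shows "(\<lambda>x. wald gY gX (f x)) \<in> borel_measurable N"
  unfolding wald_def by measurable

lemma measurable_sig2 [measurable (raw)]:
  assumes [measurable]: "f \<in> N \<rightarrow>\<^sub>M MV" "g \<in> N \<rightarrow>\<^sub>M borel"
  shows "(\<lambda>x. sig2 mu (f x) (g x)) \<in> borel_measurable N"
  unfolding sig2_def by measurable

lemma measurable_fRV [measurable (raw)]:
  assumes [measurable]: "f \<in> N \<rightarrow>\<^sub>M borel" "g \<in> N \<rightarrow>\<^sub>M MV"
  shows "(\<lambda>x. fRV om (f x) (g x)) \<in> borel_measurable N"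
  unfolding fRV_def by measurable

lemma measurable_xi [measurable (raw)]:
  assumes [measurable]: "f \<in> N \<rightarrow>\<^sub>M MV"
  shows "(\<lambda>x. xi (f x)) \<in> borel_measurable N"
  unfolding xi by measurable

sublocale V: sigma_finite_subalgebra M F_V
  by (rule sigma_finite_subalgebra_gen[OF P]) measurable
sublocale VR: sigma_finite_subalgebra M F_VR
  by (rule sigma_finite_subalgebra_gen[OF P]) measurable
sublocale VUR: sigma_finite_subalgebra M F_VUR
  by (rule sigma_finite_subalgebra_gen[OF P]) measurable
sublocale XVUR: sigma_finite_subalgebra M F_XVUR
  by (rule sigma_finite_subalgebra_gen[OF P]) measurable
sublocale ZVR: sigma_finite_subalgebra M F_ZVR
  by (rule sigma_finite_subalgebra_gen[OF P]) measurable

lemma subalgebra_XVUR_VUR: "subalgebra F_XVUR F_VUR"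
  by (rule subalgebra_gen_gen[where \<phi> = snd]) auto
lemma subalgebra_VUR_VR: "subalgebra F_VUR F_VR"
  by (rule subalgebra_gen_gen[where \<phi> = "\<lambda>(v, u, r). (v, r)"]) auto
lemma subalgebra_XVUR_VR: "subalgebra F_XVUR F_VR"
  by (rule subalgebra_gen_gen[where \<phi> = "\<lambda>(x, v, u, r). (v, r)"]) auto
lemma subalgebra_ZVR_VR: "subalgebra F_ZVR F_VR"
  by (rule subalgebra_gen_gen[where \<phi> = snd]) auto
lemma subalgebra_VR_V: "subalgebra F_VR F_V"
  by (rule subalgebra_gen_gen[where \<phi> = fst]) auto

lemma cond_exp_treatment_effect:
  "AE \<omega> in M. real_cond_exp M F_VUR (\<lambda>\<omega>. Y1 \<omega> - Y0 \<omega>) \<omega> = beta (V \<omega>) (R \<omega>)"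
proof -
  define \<phi> where "\<phi> = (\<lambda>(x, v, u, r). zeta0 v u + zeta v u * r + beta v r * x)"
  have [measurable]: "\<phi> \<in> borel \<Otimes>\<^sub>M MV \<Otimes>\<^sub>M MU \<Otimes>\<^sub>M borel \<rightarrow>\<^sub>M borel"
    unfolding \<phi>_def by measurable
  have model': "AE \<omega> in M. cexp M (borel \<Otimes>\<^sub>M MV \<Otimes>\<^sub>M MU \<Otimes>\<^sub>M borel) (\<lambda>\<omega>. (X \<omega>, V \<omega>, U \<omega>, R \<omega>)) Y \<omega>
      = \<phi> (X \<omega>, V \<omega>, U \<omega>, R \<omega>)"
    using model by (simp add: \<phi>_def)
  have "AE \<omega> in M. real_cond_exp M F_VUR (indicator {\<omega>\<in>space M. X \<omega> = 1}) \<omega> = real_cond_exp M F_VUR X \<omega>"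
    "AE \<omega> in M. real_cond_exp M F_VUR (indicator {\<omega>\<in>space M. X \<omega> = 0}) \<omega>
      = real_cond_exp M F_VUR (\<lambda>\<omega>. 1 - X \<omega>) \<omega>"
    using X01 by (intro VUR.real_cond_exp_cong AE_I2; force simp: indicator_def)+
  moreover have "AE \<omega> in M. real_cond_exp M F_VUR (\<lambda>\<omega>. 1 - X \<omega>) \<omega> = 1 - real_cond_exp M F_VUR X \<omega>"
    using VUR.real_cond_exp_diff[OF integrable_const[of "1::real"] integrable_treatment]
      VUR.real_cond_exp_F_meas[OF integrable_const[of "1::real"] borel_measurable_const]
    by eventually_elim simp
  ultimately have "AE \<omega> in M. real_cond_exp M F_VUR (indicator {\<omega>\<in>space M. X \<omega> = 1}) \<omega> \<noteq> 0 \<and>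
      real_cond_exp M F_VUR (indicator {\<omega>\<in>space M. X \<omega> = 0}) \<omega> \<noteq> 0"
    using eps Xpos unfolding cexp_def by eventually_elim auto
  then have pos: "AE \<omega> in M. cexp M (MV \<Otimes>\<^sub>M MU \<Otimes>\<^sub>M borel) (\<lambda>\<omega>. (V \<omega>, U \<omega>, R \<omega>))
      (indicator {\<omega>\<in>space M. X \<omega> = x}) \<omega> \<noteq> 0" if "x \<in> {0, 1}" for x
    using that unfolding cexp_def by (auto elim: eventually_mono)
  have [measurable]: "(\<lambda>\<omega>. (V \<omega>, U \<omega>, R \<omega>)) \<in> M \<rightarrow>\<^sub>M MV \<Otimes>\<^sub>M MU \<Otimes>\<^sub>M borel" by measurable
  have "AE \<omega> in M. real_cond_exp M F_VUR Y1 \<omega> = \<phi> (1, V \<omega>, U \<omega>, R \<omega>)"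
    using real_cond_exp_potential_outcome[OF P _ mX _ intY intY1 A1_1 _ model' pos[of 1]] consist
    unfolding cexp_def by simp
  moreover have "AE \<omega> in M. real_cond_exp M F_VUR Y0 \<omega> = \<phi> (0, V \<omega>, U \<omega>, R \<omega>)"
    using real_cond_exp_potential_outcome[OF P _ mX _ intY intY0 A1_0 _ model' pos[of 0]] consist
    unfolding cexp_def by simp
  ultimately show ?thesis
    using VUR.real_cond_exp_diff[OF intY1 intY0]
    by eventually_elim (simp add: \<phi>_def)
qed

lemma integral_untreated_effect:
  "integrable M (\<lambda>\<omega>. (1 - R \<omega>) * beta (V \<omega>) 0)"
  "(\<integral>\<omega>. (1 - R \<omega>) * (Y1 \<omega> - Y0 \<omega>) \<partial>M) = (\<integral>\<omega>. (1 - R \<omega>) * beta (V \<omega>) 0 \<partial>M)"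
proof -
  have int: "integrable M (\<lambda>\<omega>. (1 - R \<omega>) * (Y1 \<omega> - Y0 \<omega>))"
    using R01 intY0 intY1 by (intro integrable_bounded_mult) (auto intro!: AE_I2)
  have ae: "AE \<omega> in M. (1 - R \<omega>) * real_cond_exp M F_VUR (\<lambda>\<omega>. Y1 \<omega> - Y0 \<omega>) \<omega>
      = (1 - R \<omega>) * beta (V \<omega>) 0"
    using cond_exp_treatment_effect AE_space by eventually_elim (use R01 in auto)
  have cond: "integrable M (\<lambda>\<omega>. (1 - R \<omega>) * real_cond_exp M F_VUR (\<lambda>\<omega>. Y1 \<omega> - Y0 \<omega>) \<omega>)"
    "(\<integral>\<omega>. (1 - R \<omega>) * real_cond_exp M F_VUR (\<lambda>\<omega>. Y1 \<omega> - Y0 \<omega>) \<omega> \<partial>M)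
      = (\<integral>\<omega>. (1 - R \<omega>) * (Y1 \<omega> - Y0 \<omega>) \<partial>M)"
    using int by (intro VUR.real_cond_exp_intg; simp)+
  show "integrable M (\<lambda>\<omega>. (1 - R \<omega>) * beta (V \<omega>) 0)"
    by (rule integrable_cong_AE_imp[OF cond(1) _ ae]) measurable
  have "(\<integral>\<omega>. (1 - R \<omega>) * real_cond_exp M F_VUR (\<lambda>\<omega>. Y1 \<omega> - Y0 \<omega>) \<omega> \<partial>M)
      = (\<integral>\<omega>. (1 - R \<omega>) * beta (V \<omega>) 0 \<partial>M)"
    by (rule integral_cong_AE[OF _ _ ae]) measurable
  with cond(2) show "(\<integral>\<omega>. (1 - R \<omega>) * (Y1 \<omega> - Y0 \<omega>) \<partial>M) = (\<integral>\<omega>. (1 - R \<omega>) * beta (V \<omega>) 0 \<partial>M)"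
    by simp
qed

lemma cond_exp_residual_times_outcome:
  "AE \<omega> in M. real_cond_exp M F_VR (\<lambda>\<omega>. (X \<omega> - mu (V \<omega>) (R \<omega>)) * Y \<omega>) \<omega>
    = (cp (V \<omega>) (R \<omega>) - ce (V \<omega>) (R \<omega>) * cz (V \<omega>) (R \<omega>)) + beta (V \<omega>) (R \<omega>) * sig2 mu (V \<omega>) (R \<omega>)"
proof -
  have "AE \<omega> in M. real_cond_exp M F_VR (\<lambda>\<omega>. (X \<omega> - mu (V \<omega>) (R \<omega>)) * Y \<omega>) \<omega> =
      real_cond_exp M F_VR (\<lambda>\<omega>. eps (R \<omega>) (V \<omega>) (U \<omega>) * (zeta0 (V \<omega>) (U \<omega>) + zeta (V \<omega>) (U \<omega>) * R \<omega>)) \<omega>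
      - mu (V \<omega>) (R \<omega>) * real_cond_exp M F_VR (\<lambda>\<omega>. zeta0 (V \<omega>) (U \<omega>) + zeta (V \<omega>) (U \<omega>) * R \<omega>) \<omega>
      + beta (V \<omega>) (R \<omega>) * mu (V \<omega>) (R \<omega>) * (1 - mu (V \<omega>) (R \<omega>))"
    using model eps mu unfolding cexp_def
    by (intro real_cond_exp_centered_treatment_outcome[OF P XVUR.subalg subalgebra_XVUR_VUR
          subalgebra_VUR_VR _ _ _ _ _ X01 intY int_z])
       (auto simp: algebra_simps)
  moreover have "AE \<omega> in M. ce (V \<omega>) (R \<omega>) = mu (V \<omega>) (R \<omega>)"
  proof -
    have "AE \<omega> in M. real_cond_exp M F_VR (real_cond_exp M F_VUR X) \<omega> = real_cond_exp M F_VR (\<lambda>\<omega>. eps (R \<omega>) (V \<omega>) (U \<omega>)) \<omega>"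
      using eps unfolding cexp_def by (intro VR.real_cond_exp_cong) auto
    then show ?thesis
      using VR.real_cond_exp_nested_subalg[OF VUR.subalg subalgebra_VUR_VR integrable_treatment] ce mu
      unfolding cexp_def by eventually_elim simp
  qed
  ultimately show ?thesis
    using cz cp unfolding cexp_def by eventually_elim (simp add: sig2_def algebra_simps)
qed

lemma measurable_arm [measurable]:
  "arm z \<in> borel_measurable F_ZVR" "arm z \<in> borel_measurable M"
proof -
  have "{\<omega>\<in>space F_ZVR. R \<omega> = 1 \<and> Z \<omega> = z} \<in> sets F_ZVR" by measurable
  then show "arm z \<in> borel_measurable F_ZVR" by (auto intro: borel_measurable_indicator)
qed measurable

lemma integrable_arm_mult: "integrable M f \<Longrightarrow> integrable M (\<lambda>\<omega>. arm z \<omega> * f \<omega>)"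
  by (rule integrable_bounded_mult) (auto simp: indicator_def)

lemma cond_exp_arm_observed:
  fixes T :: "'a \<Rightarrow> real" and g :: "real \<Rightarrow> 'v \<Rightarrow> real"
  assumes [measurable]: "(\<lambda>(z, v). g z v) \<in> borel \<Otimes>\<^sub>M MV \<rightarrow>\<^sub>M borel"
    and T: "integrable M T"
    and g: "AE \<omega> in M. R \<omega> = 1 \<longrightarrow> real_cond_exp M F_ZVR T \<omega> = g (Z \<omega>) (V \<omega>)"
  shows "AE \<omega> in M. real_cond_exp M F_VR (\<lambda>\<omega>. arm z \<omega> * T \<omega>) \<omega> = g z (V \<omega>) * real_cond_exp M F_VR (arm z) \<omega>"
proof -
  have [measurable]: "T \<in> borel_measurable M" using T by auto
  have int_DT: "integrable M (\<lambda>\<omega>. arm z \<omega> * T \<omega>)" by (rule integrable_arm_mult[OF T])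
  have "AE \<omega> in M. real_cond_exp M F_ZVR (\<lambda>\<omega>. arm z \<omega> * T \<omega>) \<omega> = arm z \<omega> * real_cond_exp M F_ZVR T \<omega>"
    using int_DT by (intro ZVR.real_cond_exp_mult) auto
  with g have E_DT: "AE \<omega> in M. real_cond_exp M F_ZVR (\<lambda>\<omega>. arm z \<omega> * T \<omega>) \<omega> = g z (V \<omega>) * arm z \<omega>"
    by eventually_elim (auto simp: indicator_def)
  have int_gD: "integrable M (\<lambda>\<omega>. g z (V \<omega>) * arm z \<omega>)"
    by (rule integrable_cong_AE_imp[OF ZVR.real_cond_exp_int(1)[OF int_DT] _ E_DT]) measurable
  have "AE \<omega> in M. real_cond_exp M F_VR (real_cond_exp M F_ZVR (\<lambda>\<omega>. arm z \<omega> * T \<omega>)) \<omega>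
      = real_cond_exp M F_VR (\<lambda>\<omega>. g z (V \<omega>) * arm z \<omega>) \<omega>"
    using E_DT by (intro VR.real_cond_exp_cong) auto
  moreover have "AE \<omega> in M. real_cond_exp M F_VR (\<lambda>\<omega>. g z (V \<omega>) * arm z \<omega>) \<omega>
      = g z (V \<omega>) * real_cond_exp M F_VR (arm z) \<omega>"
    using int_gD by (intro VR.real_cond_exp_mult) auto
  ultimately show ?thesis
    using VR.real_cond_exp_nested_subalg[OF ZVR.subalg subalgebra_ZVR_VR int_DT]
    by eventually_elim simp
qed

lemma integrable_outcome_model:
  "integrable M (\<lambda>\<omega>. zeta0 (V \<omega>) (U \<omega>) + zeta (V \<omega>) (U \<omega>) * R \<omega> + beta (V \<omega>) (R \<omega>) * X \<omega>)"
  by (rule integrable_cong_AE_imp[OF XVUR.real_cond_exp_int(1)[OF intY] _ model[unfolded cexp_def]])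
    measurable

lemma cond_exp_arm_outcome_XVUR:
  "AE \<omega> in M. real_cond_exp M F_XVUR (\<lambda>\<omega>. arm z \<omega> * Y \<omega>) \<omega> = real_cond_exp M F_XVUR
    (\<lambda>\<omega>. arm z \<omega> * (zeta0 (V \<omega>) (U \<omega>) + zeta (V \<omega>) (U \<omega>) * R \<omega> + beta (V \<omega>) (R \<omega>) * X \<omega>)) \<omega>"
proof -
  define m where "m \<omega> = zeta0 (V \<omega>) (U \<omega>) + zeta (V \<omega>) (U \<omega>) * R \<omega> + beta (V \<omega>) (R \<omega>) * X \<omega>" for \<omega>
  define \<rho> where "\<rho> = (indicator {\<omega>\<in>space M. R \<omega> = 1} :: 'a \<Rightarrow> real)"
  define I where "I = (indicator {\<omega>\<in>space M. Z \<omega> = z} :: 'a \<Rightarrow> real)"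
  define q where "q = real_cond_exp M F_XVUR I"
  have arm_eq: "arm z \<omega> = \<rho> \<omega> * I \<omega>" for \<omega> by (simp add: \<rho>_def I_def indicator_def)
  have "{\<omega>\<in>space F_XVUR. R \<omega> = 1} \<in> sets F_XVUR" by measurable
  then have R1: "{\<omega>\<in>space M. R \<omega> = 1} \<in> sets F_XVUR" by simp
  then have [measurable]: "\<rho> \<in> borel_measurable F_XVUR" unfolding \<rho>_def by (rule borel_measurable_indicator)
  have \<rho>M [measurable]: "\<rho> \<in> borel_measurable M" unfolding \<rho>_def by measurable
  have \<rho>_bound: "AE \<omega> in M. \<bar>\<rho> \<omega>\<bar> \<le> 1" by (auto simp: \<rho>_def indicator_def)
  have [measurable]: "m \<in> borel_measurable F_XVUR" "I \<in> borel_measurable M" "m \<in> borel_measurable M"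
    unfolding m_def I_def by measurable
  have outcome: "AE \<omega> in M. real_cond_exp M F_XVUR Y \<omega> = m \<omega>"
    using model unfolding cexp_def by (simp add: m_def)
  have int_IY: "integrable M (\<lambda>\<omega>. I \<omega> * Y \<omega>)" and int_Im: "integrable M (\<lambda>\<omega>. I \<omega> * m \<omega>)"
    using intY integrable_outcome_model unfolding m_def[symmetric]
    by (auto intro!: integrable_bounded_mult simp: I_def indicator_def)
  have "AE \<omega> in M. R \<omega> = 1 \<longrightarrow> real_cond_exp M F_XVUR (\<lambda>\<omega>. I \<omega> * Y \<omega>) \<omega> = q \<omega> * real_cond_exp M F_XVUR Y \<omega>"
    using cond_indep_on_real_cond_exp[OF P A2_Y, of "{z}" snd] intY R1
    unfolding cexp_def q_def I_def by simp
  moreover have "AE \<omega> in M. real_cond_exp M F_XVUR (\<lambda>\<omega>. \<rho> \<omega> * (I \<omega> * Y \<omega>)) \<omega>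
      = \<rho> \<omega> * real_cond_exp M F_XVUR (\<lambda>\<omega>. I \<omega> * Y \<omega>) \<omega>"
    using integrable_bounded_mult[OF int_IY \<rho>M \<rho>_bound]
    by (intro XVUR.real_cond_exp_mult) auto
  moreover have "AE \<omega> in M. real_cond_exp M F_XVUR (\<lambda>\<omega>. (\<rho> \<omega> * m \<omega>) * I \<omega>) \<omega>
      = \<rho> \<omega> * m \<omega> * q \<omega>"
    unfolding q_def using integrable_bounded_mult[OF int_Im \<rho>M \<rho>_bound]
    by (intro XVUR.real_cond_exp_mult) (auto simp: mult_ac)
  ultimately show ?thesis
    using outcome AE_space unfolding m_def[symmetric]
    by eventually_elim (auto simp: arm_eq \<rho>_def mult_ac split: split_indicator)
qed

lemma cond_exp_arm_outcome:
  "AE \<omega> in M. real_cond_exp M F_VR (\<lambda>\<omega>. arm z \<omega> * Y \<omega>) \<omega> =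
    real_cond_exp M F_VR (\<lambda>\<omega>. arm z \<omega> * (zeta0 (V \<omega>) (U \<omega>) + zeta (V \<omega>) (U \<omega>) * R \<omega>)) \<omega>
    + beta (V \<omega>) (R \<omega>) * real_cond_exp M F_VR (\<lambda>\<omega>. arm z \<omega> * X \<omega>) \<omega>"
proof -
  define w where "w \<omega> = zeta0 (V \<omega>) (U \<omega>) + zeta (V \<omega>) (U \<omega>) * R \<omega>" for \<omega>
  define m where "m \<omega> = w \<omega> + beta (V \<omega>) (R \<omega>) * X \<omega>" for \<omega>
  have [measurable]: "w \<in> borel_measurable M" "m \<in> borel_measurable M"
    unfolding w_def m_def by measurable
  have int_m: "integrable M m" unfolding m_def w_def by (rule integrable_outcome_model)
  have int_w: "integrable M w" unfolding w_def by (rule int_z)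
  have "AE \<omega> in M. real_cond_exp M F_VR (real_cond_exp M F_XVUR (\<lambda>\<omega>. arm z \<omega> * Y \<omega>)) \<omega>
      = real_cond_exp M F_VR (real_cond_exp M F_XVUR (\<lambda>\<omega>. arm z \<omega> * m \<omega>)) \<omega>"
    using cond_exp_arm_outcome_XVUR[of z] unfolding m_def w_def add.assoc
    by (intro VR.real_cond_exp_cong) auto
  then have E_Y: "AE \<omega> in M. real_cond_exp M F_VR (\<lambda>\<omega>. arm z \<omega> * Y \<omega>) \<omega>
      = real_cond_exp M F_VR (\<lambda>\<omega>. arm z \<omega> * m \<omega>) \<omega>"
    using VR.real_cond_exp_nested_subalg[OF XVUR.subalg subalgebra_XVUR_VR integrable_arm_mult[OF intY, of z]]
      VR.real_cond_exp_nested_subalg[OF XVUR.subalg subalgebra_XVUR_VR integrable_arm_mult[OF int_m, of z]]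
    by eventually_elim simp
  have int_bDX: "integrable M (\<lambda>\<omega>. beta (V \<omega>) (R \<omega>) * (arm z \<omega> * X \<omega>))"
  proof -
    have "integrable M (\<lambda>\<omega>. arm z \<omega> * m \<omega> - arm z \<omega> * w \<omega>)"
      using integrable_arm_mult[OF int_m, of z] integrable_arm_mult[OF int_w, of z]
      by (rule Bochner_Integration.integrable_diff)
    then show ?thesis by (simp add: m_def algebra_simps)
  qed
  have "(\<lambda>\<omega>. arm z \<omega> * m \<omega>) = (\<lambda>\<omega>. arm z \<omega> * w \<omega> + beta (V \<omega>) (R \<omega>) * (arm z \<omega> * X \<omega>))"
    by (simp add: m_def algebra_simps)
  then have "AE \<omega> in M. real_cond_exp M F_VR (\<lambda>\<omega>. arm z \<omega> * m \<omega>) \<omega>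
      = real_cond_exp M F_VR (\<lambda>\<omega>. arm z \<omega> * w \<omega>) \<omega>
        + real_cond_exp M F_VR (\<lambda>\<omega>. beta (V \<omega>) (R \<omega>) * (arm z \<omega> * X \<omega>)) \<omega>"
    using VR.real_cond_exp_add[OF integrable_arm_mult[OF int_w, of z] int_bDX] by simp
  moreover have "AE \<omega> in M. real_cond_exp M F_VR (\<lambda>\<omega>. beta (V \<omega>) (R \<omega>) * (arm z \<omega> * X \<omega>)) \<omega>
      = beta (V \<omega>) (R \<omega>) * real_cond_exp M F_VR (\<lambda>\<omega>. arm z \<omega> * X \<omega>) \<omega>"
    using int_bDX by (intro VR.real_cond_exp_mult) auto
  ultimately show ?thesis using E_Y by eventually_elim (simp add: w_def)
qed

lemma cond_exp_arm_latent:
  "AE \<omega> in M. real_cond_exp M F_VR (\<lambda>\<omega>. arm z \<omega> * (zeta0 (V \<omega>) (U \<omega>) + zeta (V \<omega>) (U \<omega>) * R \<omega>)) \<omega>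
    = cz (V \<omega>) (R \<omega>) * real_cond_exp M F_VR (arm z) \<omega>"
proof -
  define w where "w \<omega> = zeta0 (V \<omega>) (U \<omega>) + zeta (V \<omega>) (U \<omega>) * R \<omega>" for \<omega>
  define \<rho> where "\<rho> = (indicator {\<omega>\<in>space M. R \<omega> = 1} :: 'a \<Rightarrow> real)"
  define I where "I = (indicator {\<omega>\<in>space M. Z \<omega> = z} :: 'a \<Rightarrow> real)"
  have "{\<omega>\<in>space F_VR. R \<omega> = 1} \<in> sets F_VR" by measurable
  then have R1: "{\<omega>\<in>space M. R \<omega> = 1} \<in> sets F_VR" by simp
  then have [measurable]: "\<rho> \<in> borel_measurable F_VR" unfolding \<rho>_def by (rule borel_measurable_indicator)
  have \<rho>M: "\<rho> \<in> borel_measurable M" unfolding \<rho>_def by measurable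
  have \<rho>_bound: "AE \<omega> in M. \<bar>\<rho> \<omega>\<bar> \<le> 1" by (auto simp: \<rho>_def indicator_def)
  have [measurable]: "I \<in> borel_measurable M" "w \<in> borel_measurable M" unfolding I_def w_def by measurable
  have int_w: "integrable M w" unfolding w_def by (rule int_z)
  have int_I: "integrable M I"
    unfolding I_def by (intro integrable_real_indicator) (auto simp: less_top[symmetric])
  have int_Iw: "integrable M (\<lambda>\<omega>. I \<omega> * w \<omega>)"
    using int_w by (intro integrable_bounded_mult) (auto simp: I_def indicator_def)
  have arm_eq: "arm z = (\<lambda>\<omega>. \<rho> \<omega> * I \<omega>)" by (auto simp: \<rho>_def I_def indicator_def)
  have [measurable]: "(\<lambda>(c, u). zeta0 (fst c) u + zeta (fst c) u * snd c) \<in> (MV \<Otimes>\<^sub>M borel) \<Otimes>\<^sub>M MU \<rightarrow>\<^sub>M borel"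
    by measurable
  have "AE \<omega> in M. R \<omega> = 1 \<longrightarrow> real_cond_exp M F_VR (\<lambda>\<omega>. I \<omega> * w \<omega>) \<omega>
      = real_cond_exp M F_VR I \<omega> * real_cond_exp M F_VR w \<omega>"
    using cond_indep_on_real_cond_exp[OF P A2_U, of "{z}" "\<lambda>(c, u). zeta0 (fst c) u + zeta (fst c) u * snd c"]
      int_z R1
    unfolding cexp_def I_def w_def by simp
  moreover have "AE \<omega> in M. real_cond_exp M F_VR (\<lambda>\<omega>. \<rho> \<omega> * (I \<omega> * w \<omega>)) \<omega>
      = \<rho> \<omega> * real_cond_exp M F_VR (\<lambda>\<omega>. I \<omega> * w \<omega>) \<omega>"
    using integrable_bounded_mult[OF int_Iw \<rho>M \<rho>_bound] by (intro VR.real_cond_exp_mult) auto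
  moreover have "AE \<omega> in M. real_cond_exp M F_VR (\<lambda>\<omega>. \<rho> \<omega> * I \<omega>) \<omega> = \<rho> \<omega> * real_cond_exp M F_VR I \<omega>"
    using integrable_bounded_mult[OF int_I \<rho>M \<rho>_bound] by (intro VR.real_cond_exp_mult) auto
  moreover have "AE \<omega> in M. real_cond_exp M F_VR w \<omega> = cz (V \<omega>) (R \<omega>)"
    using cz unfolding cexp_def w_def .
  ultimately have "AE \<omega> in M. real_cond_exp M F_VR (\<lambda>\<omega>. \<rho> \<omega> * (I \<omega> * w \<omega>)) \<omega>
      = cz (V \<omega>) (R \<omega>) * real_cond_exp M F_VR (\<lambda>\<omega>. \<rho> \<omega> * I \<omega>) \<omega>"
    using AE_space
  proof eventually_elim
    case (elim \<omega>)
    then show ?case by (cases "R \<omega> = 1") (simp_all add: \<rho>_def)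
  qed
  moreover have "(\<lambda>\<omega>. arm z \<omega> * (zeta0 (V \<omega>) (U \<omega>) + zeta (V \<omega>) (U \<omega>) * R \<omega>))
      = (\<lambda>\<omega>. \<rho> \<omega> * (I \<omega> * w \<omega>))"
    by (auto simp: \<rho>_def I_def w_def indicator_def)
  ultimately show ?thesis by (simp add: arm_eq)
qed

lemma cond_exp_arm_pos:
  assumes "z \<in> {0, 1}"
  shows "AE \<omega> in M. R \<omega> = 1 \<longrightarrow> 0 < real_cond_exp M F_VR (arm z) \<omega>"
proof -
  define \<rho> where "\<rho> = (indicator {\<omega>\<in>space M. R \<omega> = 1} :: 'a \<Rightarrow> real)"
  define I where "I z = (indicator {\<omega>\<in>space M. Z \<omega> = z} :: 'a \<Rightarrow> real)" for z
  have "{\<omega>\<in>space F_VR. R \<omega> = 1} \<in> sets F_VR" by measurable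
  then have [measurable]: "\<rho> \<in> borel_measurable F_VR" unfolding \<rho>_def by (auto intro: borel_measurable_indicator)
  have \<rho>M: "\<rho> \<in> borel_measurable M" unfolding \<rho>_def by measurable
  have \<rho>_bound: "AE \<omega> in M. \<bar>\<rho> \<omega>\<bar> \<le> 1" by (auto simp: \<rho>_def indicator_def)
  have [measurable]: "I z \<in> borel_measurable M" for z unfolding I_def by measurable
  have int_I: "integrable M (I z)" for z
    unfolding I_def by (intro integrable_real_indicator) (auto simp: less_top[symmetric])
  have E_arm: "AE \<omega> in M. real_cond_exp M F_VR (\<lambda>\<omega>. \<rho> \<omega> * I z \<omega>) \<omega> = \<rho> \<omega> * real_cond_exp M F_VR (I z) \<omega>"
    using integrable_bounded_mult[OF int_I \<rho>M \<rho>_bound] by (intro VR.real_cond_exp_mult) auto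
  have "AE \<omega> in M. real_cond_exp M F_VR (I 0) \<omega> = real_cond_exp M F_VR (\<lambda>\<omega>. 1 - I 1 \<omega>) \<omega>"
    using Z01 by (intro VR.real_cond_exp_cong AE_I2) (auto simp: I_def indicator_def)
  then have "AE \<omega> in M. real_cond_exp M F_VR (I 0) \<omega> = 1 - real_cond_exp M F_VR (I 1) \<omega>"
    using VR.real_cond_exp_diff[OF integrable_const[of "1::real"] int_I]
      VR.real_cond_exp_F_meas[OF integrable_const[of "1::real"] borel_measurable_const]
    by eventually_elim simp
  then have "AE \<omega> in M. R \<omega> = 1 \<longrightarrow> 0 < real_cond_exp M F_VR (I 0) \<omega> \<and> 0 < real_cond_exp M F_VR (I 1) \<omega>"
    using Zpos unfolding cexp_def I_def by eventually_elim auto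
  then have "AE \<omega> in M. R \<omega> = 1 \<longrightarrow> 0 < real_cond_exp M F_VR (I z) \<omega>"
    using assms by (auto elim: eventually_mono)
  then have "AE \<omega> in M. R \<omega> = 1 \<longrightarrow> 0 < real_cond_exp M F_VR (\<lambda>\<omega>. \<rho> \<omega> * I z \<omega>) \<omega>"
    using E_arm AE_space by eventually_elim (auto simp: \<rho>_def split: split_indicator)
  moreover have "arm z = (\<lambda>\<omega>. \<rho> \<omega> * I z \<omega>)" by (auto simp: \<rho>_def I_def indicator_def)
  ultimately show ?thesis by simp
qed

lemma instrument_moment_equation:
  assumes "z \<in> {0, 1}"
  shows "AE \<omega> in M. R \<omega> = 1 \<longrightarrow> gY z (V \<omega>) = cz (V \<omega>) 1 + beta (V \<omega>) 1 * gX z (V \<omega>)"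
  using cond_exp_arm_observed[OF mgY intY gY[unfolded cexp_def], of z]
    cond_exp_arm_observed[OF mgX integrable_treatment gX[unfolded cexp_def], of z]
    cond_exp_arm_outcome[of z] cond_exp_arm_latent[of z] cond_exp_arm_pos[OF assms]
proof eventually_elim
  case (elim \<omega>)
  let ?p = "real_cond_exp M F_VR (arm z) \<omega>"
  show ?case
  proof
    assume R: "R \<omega> = 1"
    then have "gY z (V \<omega>) * ?p = (cz (V \<omega>) 1 + beta (V \<omega>) 1 * gX z (V \<omega>)) * ?p"
      using elim by (simp add: algebra_simps)
    moreover have "?p > 0" using elim R by simp
    ultimately show "gY z (V \<omega>) = cz (V \<omega>) 1 + beta (V \<omega>) 1 * gX z (V \<omega>)" by simp
  qed
qed

lemma wald_eq_beta_auxiliary: "AE \<omega> in M. wald gY gX (V \<omega>) = beta (V \<omega>) 1"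
proof (rule AE_comp_if_AE_where_weight_nonzero[OF P mV _ _ _ om])
  show "integrable M R" by (rule integrable_source)
  show "AE \<omega> in M. 0 \<le> R \<omega>"
    using R01 by (auto intro!: AE_I2)
  show "AE \<omega> in M. 0 < om (V \<omega>)"
    using overlap by (auto elim: eventually_mono)
  show "{v \<in> space MV. wald gY gX v = beta v 1} \<in> sets MV" by measurable
  show "AE \<omega> in M. R \<omega> \<noteq> 0 \<longrightarrow> wald gY gX (V \<omega>) = beta (V \<omega>) 1"
    using instrument_moment_equation[OF insertI1] instrument_moment_equation[OF insertI2[OF singletonI]]
      relevance AE_space
    by eventually_elim (use R01 in \<open>auto simp: wald_def field_simps\<close>)
qed measurable

abbreviation weighted_residual :: "'a \<Rightarrow> real"
  where "weighted_residual \<equiv> \<lambda>\<omega>. (2 * R \<omega> - 1) * (X \<omega> - mu (V \<omega>) (R \<omega>)) * Y \<omega> /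
    (fRV om (R \<omega>) (V \<omega>) * sig2 mu (V \<omega>) 0)"

abbreviation adjusted_wald :: "'v \<Rightarrow> real"
  where "adjusted_wald \<equiv> \<lambda>v. (wald gY gX v * sig2 mu v 1 - xi v) / sig2 mu v 0"

lemma integrable_weighted_residual: "integrable M weighted_residual"
proof (rule Bochner_Integration.integrable_bound[OF int_eta])
  show "AE \<omega> in M. norm (weighted_residual \<omega>) \<le>
    norm ((X \<omega> - mu (V \<omega>) (R \<omega>)) * Y \<omega> / (fRV om (R \<omega>) (V \<omega>) * sig2 mu (V \<omega>) 0))"
    using R01 by (auto intro!: AE_I2 simp: abs_mult)
qed measurable

lemma cond_exp_weighted_residual_VR:
  "AE \<omega> in M. real_cond_exp M F_VR weighted_residual \<omega> =
    (2 * R \<omega> - 1) / (fRV om (R \<omega>) (V \<omega>) * sig2 mu (V \<omega>) 0) *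
    ((cp (V \<omega>) (R \<omega>) - ce (V \<omega>) (R \<omega>) * cz (V \<omega>) (R \<omega>)) + beta (V \<omega>) (R \<omega>) * sig2 mu (V \<omega>) (R \<omega>))"
proof -
  have "weighted_residual = (\<lambda>\<omega>. (2 * R \<omega> - 1) / (fRV om (R \<omega>) (V \<omega>) * sig2 mu (V \<omega>) 0) *
      ((X \<omega> - mu (V \<omega>) (R \<omega>)) * Y \<omega>))"
    by auto
  then have "AE \<omega> in M. real_cond_exp M F_VR weighted_residual \<omega> =
      (2 * R \<omega> - 1) / (fRV om (R \<omega>) (V \<omega>) * sig2 mu (V \<omega>) 0) *
      real_cond_exp M F_VR (\<lambda>\<omega>. (X \<omega> - mu (V \<omega>) (R \<omega>)) * Y \<omega>) \<omega>"
    using integrable_weighted_residual by (simp only:) (intro VR.real_cond_exp_mult; simp)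
  with cond_exp_residual_times_outcome show ?thesis by eventually_elim simp
qed

lemma cond_exp_weighted_residual:
  "AE \<omega> in M. real_cond_exp M F_V weighted_residual \<omega> = adjusted_wald (V \<omega>) - beta (V \<omega>) 0"
proof -
  define k where "k v r = (2 * r - 1) / (fRV om r v * sig2 mu v 0) *
    ((cp v r - ce v r * cz v r) + beta v r * sig2 mu v r)" for v r
  have [measurable]: "(\<lambda>\<omega>. k (V \<omega>) r) \<in> borel_measurable F_V" "(\<lambda>\<omega>. k (V \<omega>) r) \<in> borel_measurable M" for r
    unfolding k_def by measurable
  have "AE \<omega> in M. real_cond_exp M F_VR weighted_residual \<omega> = k (V \<omega>) (R \<omega>)"
    using cond_exp_weighted_residual_VR by eventually_elim (simp add: k_def)
  then have E_VR: "AE \<omega> in M. real_cond_exp M F_VR weighted_residual \<omega> = k (V \<omega>) 1 * R \<omega> + k (V \<omega>) 0 * (1 - R \<omega>)"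
    using AE_space by eventually_elim (use R01 in auto)
  have int_k: "integrable M (\<lambda>\<omega>. k (V \<omega>) 1 * R \<omega> + k (V \<omega>) 0 * (1 - R \<omega>))"
    by (rule integrable_cong_AE_imp[OF VR.real_cond_exp_int(1)[OF integrable_weighted_residual] _ E_VR])
      measurable
  have "AE \<omega> in M. real_cond_exp M F_V (real_cond_exp M F_VR weighted_residual) \<omega>
      = real_cond_exp M F_V (\<lambda>\<omega>. k (V \<omega>) 1 * R \<omega> + k (V \<omega>) 0 * (1 - R \<omega>)) \<omega>"
    using E_VR by (intro V.real_cond_exp_cong) auto
  moreover note V.real_cond_exp_nested_subalg[OF VR.subalg subalgebra_VR_V integrable_weighted_residual]
  moreover have "AE \<omega> in M. real_cond_exp M F_V (\<lambda>\<omega>. k (V \<omega>) 1 * R \<omega> + k (V \<omega>) 0 * (1 - R \<omega>)) \<omega>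
      = k (V \<omega>) 1 * om (V \<omega>) + k (V \<omega>) 0 * (1 - om (V \<omega>))"
    using real_cond_exp_binary_mixture[OF P V.sigma_finite_subalgebra_axioms _ _ mR R01 int_k] om
    unfolding cexp_def by (auto elim: AE_mp[OF _ AE_I2])
  \<comment> \<open>the two arms contribute \<open>\<psi>(V, 1)/\<sigma>\<^sub>0\<^sup>2(V)\<close> and \<open>-\<psi>(V, 0)/\<sigma>\<^sub>0\<^sup>2(V)\<close>, where \<open>\<psi>(V, r) = Cov\<^sub>r + \<beta>\<^sub>r(V) \<sigma>\<^sub>r\<^sup>2(V)\<close>\<close>
  moreover have "AE \<omega> in M. k (V \<omega>) 1 * om (V \<omega>) + k (V \<omega>) 0 * (1 - om (V \<omega>))
      = adjusted_wald (V \<omega>) - beta (V \<omega>) 0"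
    using wald_eq_beta_auxiliary overlap sig0pos
  proof eventually_elim
    case (elim \<omega>)
    then have "om (V \<omega>) \<noteq> 0" "1 - om (V \<omega>) \<noteq> 0" "sig2 mu (V \<omega>) 0 \<noteq> 0" by auto
    with elim(1) show ?case by (simp add: k_def fRV_def xi field_simps)
  qed
  ultimately show ?thesis by eventually_elim simp
qed

lemma beta0_identification:
  "AE \<omega> in M. beta (V \<omega>) 0 = cexp M MV V (\<lambda>\<omega>. adjusted_wald (V \<omega>) - weighted_residual \<omega>) \<omega>"
proof -
  have "AE \<omega> in M. real_cond_exp M F_V (\<lambda>\<omega>. adjusted_wald (V \<omega>) + - weighted_residual \<omega>) \<omega>
      = adjusted_wald (V \<omega>) + real_cond_exp M F_V (\<lambda>\<omega>. - weighted_residual \<omega>) \<omega>"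
    using integrable_weighted_residual
    by (intro real_cond_exp_add_measurable[OF P V.sigma_finite_subalgebra_axioms]) auto
  moreover have "AE \<omega> in M. real_cond_exp M F_V (\<lambda>\<omega>. - 1 * weighted_residual \<omega>) \<omega>
      = - 1 * real_cond_exp M F_V weighted_residual \<omega>"
    by (rule V.real_cond_exp_cmult[OF integrable_weighted_residual])
  ultimately show ?thesis
    using cond_exp_weighted_residual unfolding cexp_def by eventually_elim simp
qed

lemma integral_untreated_effect_identified:
  "(\<integral>\<omega>. (1 - R \<omega>) * (Y1 \<omega> - Y0 \<omega>) \<partial>M) =
    (\<integral>\<omega>. (1 - R \<omega>) * adjusted_wald (V \<omega>)
      - (R \<omega> / fRV om (R \<omega>) (V \<omega>) - 1) * ((X \<omega> - mu (V \<omega>) (R \<omega>)) * Y \<omega>) / sig2 mu (V \<omega>) 0 \<partial>M)"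
proof -
  define h where "h = weighted_residual"
  define e where "e = real_cond_exp M F_V h"
  have [measurable]: "h \<in> borel_measurable M" "e \<in> borel_measurable M"
    unfolding h_def e_def by measurable
  have int_h: "integrable M h" unfolding h_def by (rule integrable_weighted_residual)
  have e_eq: "AE \<omega> in M. e \<omega> = adjusted_wald (V \<omega>) - beta (V \<omega>) 0"
    using cond_exp_weighted_residual unfolding e_def h_def .
  have "integrable M (\<lambda>\<omega>. (1 - R \<omega>) * e \<omega>)"
    using R01 unfolding e_def by (intro integrable_bounded_mult V.real_cond_exp_int(1) int_h) (auto intro!: AE_I2)
  then have int_eR: "integrable M (\<lambda>\<omega>. e \<omega> * (1 - R \<omega>))" by (simp add: mult.commute)
  have int_omh: "integrable M (\<lambda>\<omega>. (1 - om (V \<omega>)) * h \<omega>)"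
  proof (intro integrable_bounded_mult int_h)
    show "AE \<omega> in M. \<bar>1 - om (V \<omega>)\<bar> \<le> 1" using overlap by eventually_elim auto
  qed measurable
  have "AE \<omega> in M. real_cond_exp M F_V (\<lambda>\<omega>. 1 - R \<omega>) \<omega> = 1 - om (V \<omega>)"
    using V.real_cond_exp_diff[OF integrable_const[of "1::real"] integrable_source]
      V.real_cond_exp_F_meas[OF integrable_const[of "1::real"] borel_measurable_const] om
    unfolding cexp_def by eventually_elim simp
  then have balance: "(\<integral>\<omega>. e \<omega> * (1 - R \<omega>) \<partial>M) = (\<integral>\<omega>. (1 - om (V \<omega>)) * h \<omega> \<partial>M)"
    using int_eR int_omh unfolding e_def
    by (intro integral_real_cond_exp_mult_eq[OF V.sigma_finite_subalgebra_axioms]) auto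
  \<comment> \<open>the weights \<open>R / f(R | V) - 1\<close> turn \<open>\<eta> Y / \<sigma>\<^sub>0\<^sup>2(V)\<close> into \<open>(1 - \<omega>(V)) h\<close>\<close>
  have "AE \<omega> in M. (1 - R \<omega>) * adjusted_wald (V \<omega>)
      - (R \<omega> / fRV om (R \<omega>) (V \<omega>) - 1) * ((X \<omega> - mu (V \<omega>) (R \<omega>)) * Y \<omega>) / sig2 mu (V \<omega>) 0
      = (1 - R \<omega>) * beta (V \<omega>) 0 + (e \<omega> * (1 - R \<omega>) - (1 - om (V \<omega>)) * h \<omega>)"
    using e_eq overlap sig0pos AE_space
  proof eventually_elim
    case (elim \<omega>)
    then have "R \<omega> = 0 \<or> R \<omega> = 1" "om (V \<omega>) \<noteq> 0" "1 - om (V \<omega>) \<noteq> 0" "sig2 mu (V \<omega>) 0 \<noteq> 0"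
      using R01 by auto
    then have weights: "(R \<omega> / fRV om (R \<omega>) (V \<omega>) - 1) * ((X \<omega> - mu (V \<omega>) (R \<omega>)) * Y \<omega>) / sig2 mu (V \<omega>) 0
        = (1 - om (V \<omega>)) * h \<omega>"
      by (auto simp: h_def fRV_def field_simps)
    show ?case unfolding elim(1) weights by (simp add: algebra_simps)
  qed
  then have "(\<integral>\<omega>. (1 - R \<omega>) * adjusted_wald (V \<omega>)
      - (R \<omega> / fRV om (R \<omega>) (V \<omega>) - 1) * ((X \<omega> - mu (V \<omega>) (R \<omega>)) * Y \<omega>) / sig2 mu (V \<omega>) 0 \<partial>M)
    = (\<integral>\<omega>. (1 - R \<omega>) * beta (V \<omega>) 0 + (e \<omega> * (1 - R \<omega>) - (1 - om (V \<omega>)) * h \<omega>) \<partial>M)"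
    by (intro integral_cong_AE) auto
  also have "\<dots> = (\<integral>\<omega>. (1 - R \<omega>) * beta (V \<omega>) 0 \<partial>M)"
    using integral_untreated_effect(1) int_eR int_omh balance by simp
  finally show ?thesis using integral_untreated_effect(2) by simp
qed

end

lemma divide_diff_common:
  fixes a b c q s :: real
  shows "a * b / (q * s) - c / (q * s) = (a * (b / s) - c / s) / q"
  by (cases "q = 0"; cases "s = 0") (simp_all add: field_simps)

theorem proposition1:
  fixes M :: "'a measure" and MV :: "'v measure" and MU :: "'u measure"
    and R X Z Y Y0 Y1 :: "'a \<Rightarrow> real" and V :: "'a \<Rightarrow> 'v" and U :: "'a \<Rightarrow> 'u"
    and eps :: "real \<Rightarrow> 'v \<Rightarrow> 'u \<Rightarrow> real"
    and zeta0 zeta :: "'v \<Rightarrow> 'u \<Rightarrow> real" and beta :: "'v \<Rightarrow> real \<Rightarrow> real"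
    and om :: "'v \<Rightarrow> real" and mu :: "'v \<Rightarrow> real \<Rightarrow> real"
    and gY gX :: "real \<Rightarrow> 'v \<Rightarrow> real"
    and ce cz cp :: "'v \<Rightarrow> real \<Rightarrow> real" and xi :: "'v \<Rightarrow> real"
  assumes P: "prob_space M"
    (* random variables *)
    and mR: "R \<in> borel_measurable M" and mX: "X \<in> borel_measurable M"
    and mZ: "Z \<in> borel_measurable M" and mY: "Y \<in> borel_measurable M"
    and mV: "V \<in> M \<rightarrow>\<^sub>M MV" and mU: "U \<in> M \<rightarrow>\<^sub>M MU"
    and R01: "\<forall>\<omega>\<in>space M. R \<omega> \<in> {0, 1}"
    and X01: "\<forall>\<omega>\<in>space M. X \<omega> \<in> {0, 1}"
    and Z01: "\<forall>\<omega>\<in>space M. Z \<omega> \<in> {0, 1}"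
    and intY: "integrable M Y" and intY0: "integrable M Y0" and intY1: "integrable M Y1"
    and consist: "\<forall>\<omega>\<in>space M. Y \<omega> = X \<omega> * Y1 \<omega> + (1 - X \<omega>) * Y0 \<omega>"
    (* (A1) Y_x independent of X given V, U, R *)
    and A1_0: "cond_indep_on M (\<lambda>_. True) borel Y0 borel X (MV \<Otimes>\<^sub>M MU \<Otimes>\<^sub>M borel)
                 (\<lambda>\<omega>. (V \<omega>, U \<omega>, R \<omega>))"
    and A1_1: "cond_indep_on M (\<lambda>_. True) borel Y1 borel X (MV \<Otimes>\<^sub>M MU \<Otimes>\<^sub>M borel)
                 (\<lambda>\<omega>. (V \<omega>, U \<omega>, R \<omega>))"
    (* (A2) *)
    and A2_U: "cond_indep_on M (\<lambda>\<omega>. R \<omega> = 1) borel Z MU U (MV \<Otimes>\<^sub>M borel) (\<lambda>\<omega>. (V \<omega>, R \<omega>))"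
    and A2_Y: "cond_indep_on M (\<lambda>\<omega>. R \<omega> = 1) borel Z borel Y
                 (borel \<Otimes>\<^sub>M MV \<Otimes>\<^sub>M MU \<Otimes>\<^sub>M borel) (\<lambda>\<omega>. (X \<omega>, V \<omega>, U \<omega>, R \<omega>))"
    (* versions gY z v = E(Y | Z = z, V = v, R = 1), gX z v = E(X | Z = z, V = v, R = 1) *)
    and mgY: "(\<lambda>(z, v). gY z v) \<in> borel \<Otimes>\<^sub>M MV \<rightarrow>\<^sub>M borel"
    and mgX: "(\<lambda>(z, v). gX z v) \<in> borel \<Otimes>\<^sub>M MV \<rightarrow>\<^sub>M borel"
    and gY: "AE \<omega> in M. R \<omega> = 1 \<longrightarrow>
               cexp M (borel \<Otimes>\<^sub>M MV \<Otimes>\<^sub>M borel) (\<lambda>\<omega>. (Z \<omega>, V \<omega>, R \<omega>)) Y \<omega> = gY (Z \<omega>) (V \<omega>)"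
    and gX: "AE \<omega> in M. R \<omega> = 1 \<longrightarrow>
               cexp M (borel \<Otimes>\<^sub>M MV \<Otimes>\<^sub>M borel) (\<lambda>\<omega>. (Z \<omega>, V \<omega>, R \<omega>)) X \<omega> = gX (Z \<omega>) (V \<omega>)"
    (* Z positivity within R = 1 and instrument relevance (Z, X dependent given V, R = 1) *)
    and Zpos: "AE \<omega> in M. R \<omega> = 1 \<longrightarrow>
               0 < cexp M (MV \<Otimes>\<^sub>M borel) (\<lambda>\<omega>. (V \<omega>, R \<omega>)) (indicator {x\<in>space M. Z x = 1}) \<omega> \<and>
               cexp M (MV \<Otimes>\<^sub>M borel) (\<lambda>\<omega>. (V \<omega>, R \<omega>)) (indicator {x\<in>space M. Z x = 1}) \<omega> < 1"
    and relevance: "AE \<omega> in M. R \<omega> = 1 \<longrightarrow> gX 1 (V \<omega>) \<noteq> gX 0 (V \<omega>)"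
    (* relaxed outcome model *)
    and mzeta0: "(\<lambda>(v, u). zeta0 v u) \<in> MV \<Otimes>\<^sub>M MU \<rightarrow>\<^sub>M borel"
    and mzeta: "(\<lambda>(v, u). zeta v u) \<in> MV \<Otimes>\<^sub>M MU \<rightarrow>\<^sub>M borel"
    and mbeta: "(\<lambda>(v, r). beta v r) \<in> MV \<Otimes>\<^sub>M borel \<rightarrow>\<^sub>M borel"
    and model: "AE \<omega> in M.
       cexp M (borel \<Otimes>\<^sub>M MV \<Otimes>\<^sub>M MU \<Otimes>\<^sub>M borel) (\<lambda>\<omega>. (X \<omega>, V \<omega>, U \<omega>, R \<omega>)) Y \<omega> =
         zeta0 (V \<omega>) (U \<omega>) + zeta (V \<omega>) (U \<omega>) * R \<omega> + beta (V \<omega>) (R \<omega>) * X \<omega>"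
    (* eps r v u = E(X | V = v, U = u, R = r); treatment positivity *)
    and meps: "(\<lambda>(r, v, u). eps r v u) \<in> borel \<Otimes>\<^sub>M MV \<Otimes>\<^sub>M MU \<rightarrow>\<^sub>M borel"
    and eps: "AE \<omega> in M. cexp M (MV \<Otimes>\<^sub>M MU \<Otimes>\<^sub>M borel) (\<lambda>\<omega>. (V \<omega>, U \<omega>, R \<omega>)) X \<omega>
                = eps (R \<omega>) (V \<omega>) (U \<omega>)"
    and Xpos: "AE \<omega> in M. 0 < eps (R \<omega>) (V \<omega>) (U \<omega>) \<and> eps (R \<omega>) (V \<omega>) (U \<omega>) < 1"
    (* omega(v) = P(R = 1 | V = v); overlap *)
    and mom: "om \<in> MV \<rightarrow>\<^sub>M borel"
    and om: "AE \<omega> in M. cexp M MV V R \<omega> = om (V \<omega>)"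
    and overlap: "AE \<omega> in M. 0 < om (V \<omega>) \<and> om (V \<omega>) < 1"
    (* mu(v, r) = E(X | V = v, R = r); sigma_0^2(V) > 0 *)
    and mmu: "(\<lambda>(v, r). mu v r) \<in> MV \<Otimes>\<^sub>M borel \<rightarrow>\<^sub>M borel"
    and mu: "AE \<omega> in M. cexp M (MV \<Otimes>\<^sub>M borel) (\<lambda>\<omega>. (V \<omega>, R \<omega>)) X \<omega> = mu (V \<omega>) (R \<omega>)"
    and sig0pos: "AE \<omega> in M. 0 < sig2 mu (V \<omega>) 0"
    (* conditional covariances Cov{eps_r(V,U), zeta_r(V,U) | V, R = r},
       with zeta_r(V,U) = E(Y | V,U,R = r, X = 0) = zeta0(V,U) + zeta(V,U) r *)
    and int_z: "integrable M (\<lambda>\<omega>. zeta0 (V \<omega>) (U \<omega>) + zeta (V \<omega>) (U \<omega>) * R \<omega>)"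
    and int_ez: "integrable M (\<lambda>\<omega>. eps (R \<omega>) (V \<omega>) (U \<omega>) *
                   (zeta0 (V \<omega>) (U \<omega>) + zeta (V \<omega>) (U \<omega>) * R \<omega>))"
    and mce: "(\<lambda>(v, r). ce v r) \<in> MV \<Otimes>\<^sub>M borel \<rightarrow>\<^sub>M borel"
    and mcz: "(\<lambda>(v, r). cz v r) \<in> MV \<Otimes>\<^sub>M borel \<rightarrow>\<^sub>M borel"
    and mcp: "(\<lambda>(v, r). cp v r) \<in> MV \<Otimes>\<^sub>M borel \<rightarrow>\<^sub>M borel"
    and ce: "AE \<omega> in M. cexp M (MV \<Otimes>\<^sub>M borel) (\<lambda>\<omega>. (V \<omega>, R \<omega>))
               (\<lambda>\<omega>. eps (R \<omega>) (V \<omega>) (U \<omega>)) \<omega> = ce (V \<omega>) (R \<omega>)"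
    and cz: "AE \<omega> in M. cexp M (MV \<Otimes>\<^sub>M borel) (\<lambda>\<omega>. (V \<omega>, R \<omega>))
               (\<lambda>\<omega>. zeta0 (V \<omega>) (U \<omega>) + zeta (V \<omega>) (U \<omega>) * R \<omega>) \<omega> = cz (V \<omega>) (R \<omega>)"
    and cp: "AE \<omega> in M. cexp M (MV \<Otimes>\<^sub>M borel) (\<lambda>\<omega>. (V \<omega>, R \<omega>))
               (\<lambda>\<omega>. eps (R \<omega>) (V \<omega>) (U \<omega>) * (zeta0 (V \<omega>) (U \<omega>) + zeta (V \<omega>) (U \<omega>) * R \<omega>)) \<omega>
             = cp (V \<omega>) (R \<omega>)"
    and xi: "\<And>v. xi v = (cp v 0 - ce v 0 * cz v 0) - (cp v 1 - ce v 1 * cz v 1)"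
    (* existence of the expectations in the identification formulas *)
    and int_eta: "integrable M (\<lambda>\<omega>. (X \<omega> - mu (V \<omega>) (R \<omega>)) * Y \<omega> /
                    (fRV om (R \<omega>) (V \<omega>) * sig2 mu (V \<omega>) 0))"
  shows "(AE \<omega> in M. beta (V \<omega>) 0 =
            cexp M MV V (\<lambda>\<omega>.
               (wald gY gX (V \<omega>) * sig2 mu (V \<omega>) 1 - xi (V \<omega>)) / sig2 mu (V \<omega>) 0
               - (2 * R \<omega> - 1) * (X \<omega> - mu (V \<omega>) (R \<omega>)) * Y \<omega> /
                   (fRV om (R \<omega>) (V \<omega>) * sig2 mu (V \<omega>) 0)) \<omega>)
       \<and> (let q = measure M {\<omega>\<in>space M. R \<omega> = 0} in
           (\<integral>\<omega>. (1 - R \<omega>) * (Y1 \<omega> - Y0 \<omega>) \<partial>M) / q =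
           (\<integral>\<omega>. (1 - R \<omega>) * (wald gY gX (V \<omega>) * sig2 mu (V \<omega>) 1 - xi (V \<omega>)) /
                    (q * sig2 mu (V \<omega>) 0)
                 - (R \<omega> / fRV om (R \<omega>) (V \<omega>) - 1) * ((X \<omega> - mu (V \<omega>) (R \<omega>)) * Y \<omega>) /
                    (q * sig2 mu (V \<omega>) 0) \<partial>M))"
proof -
  interpret iv_fusion_model M MV MU R X Z Y Y0 Y1 V U eps zeta0 zeta beta om mu gY gX ce cz cp xi
    by (intro iv_fusion_model.intro) (fact assms)+
  show ?thesis
    unfolding Let_def divide_diff_common integral_divide_zero
    using beta0_identification integral_untreated_effect_identified by simp
qed

end
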